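(* For the $n$-sun $S_n$, $n\ge 3$: $b(S_3)=1$, $b(S_n)=2$ for all $n\ge 4$, and $b^m(S_n)=2$ for all $n\ge 3$.
   Context: For $n\ge 3$, the $n$-sun $S_n$ is the graph with vertex set $\{x_1,\dots,x_n,y_1,\dots,y_n\}$ and edge set consisting of all edges $\{x_i,x_j\}$ for $1\le i<j\le n$, the edges $\{x_i,y_i\},\{x_{i+1},y_i\}$ for $1\le i<n$, and the edges $\{x_1,y_n\},\{x_n,y_n\}$. An EPG representation of a graph is a set of paths on a rectangular grid (sequences of grid points joined consecutively by grid edges), one per vertex, such that two vertices are adjacent iff their paths share a grid edge. A bend is a point of a path where a horizontal and a vertical grid edge of the path meet; a path is monotonic if it is ascending in both columns and rows. $B_k$ ($B_k^m$) is the class of graphs having an EPG representation in which every path has at most $k$ bends (and is monotonic). The bend number $b(G)$ is the smallest $k\in\mathbb{N}$ with $G\in B_k$, and the monotonic bend number $b^m(G)$ is the smallest $k\in\mathbb{N}$ with $G\in B_k^m$. *)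

theory Defs
  imports Main
begin

type_synonym gpoint = "int \<times> int"
type_synonym gpath = "gpoint list"

definition grid_adj :: "gpoint \<Rightarrow> gpoint \<Rightarrow> bool" where
  "grid_adj p q \<longleftrightarrow> \<bar>fst p - fst q\<bar> + \<bar>snd p - snd q\<bar> = 1"

text \<open>A path on the grid: a sequence of distinct grid points (at least two, so it uses
  at least one grid edge), consecutive ones joined by a grid edge.\<close>
definition is_grid_path :: "gpath \<Rightarrow> bool" where
  "is_grid_path P \<longleftrightarrow> length P \<ge> 2 \<and> distinct P \<and>
     (\<forall>i. Suc i < length P \<longrightarrow> grid_adj (P ! i) (P ! Suc i))"

definition path_edges :: "gpath \<Rightarrow> gpoint set set" where
  "path_edges P = {{P ! i, P ! Suc i} | i. Suc i < length P}"

definition horizontal_step :: "gpoint \<Rightarrow> gpoint \<Rightarrow> bool" where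
  "horizontal_step p q \<longleftrightarrow> snd p = snd q"

definition bends :: "gpath \<Rightarrow> nat" where
  "bends P = card {i. 0 < i \<and> Suc i < length P \<and>
      horizontal_step (P ! (i - 1)) (P ! i) \<noteq> horizontal_step (P ! i) (P ! Suc i)}"

definition monotonic_path :: "gpath \<Rightarrow> bool" where
  "monotonic_path P \<longleftrightarrow> (\<forall>i. Suc i < length P \<longrightarrow>
      fst (P ! i) \<le> fst (P ! Suc i) \<and> snd (P ! i) \<le> snd (P ! Suc i))"

definition EPG_rep :: "'v set \<Rightarrow> ('v \<Rightarrow> 'v \<Rightarrow> bool) \<Rightarrow> ('v \<Rightarrow> gpath) \<Rightarrow> bool" where
  "EPG_rep V adj R \<longleftrightarrow> (\<forall>v\<in>V. is_grid_path (R v)) \<and>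
     (\<forall>u\<in>V. \<forall>v\<in>V. u \<noteq> v \<longrightarrow> (adj u v \<longleftrightarrow> path_edges (R u) \<inter> path_edges (R v) \<noteq> {}))"

definition in_B :: "nat \<Rightarrow> 'v set \<Rightarrow> ('v \<Rightarrow> 'v \<Rightarrow> bool) \<Rightarrow> bool" where
  "in_B k V adj \<longleftrightarrow> (\<exists>R. EPG_rep V adj R \<and> (\<forall>v\<in>V. bends (R v) \<le> k))"

definition in_Bm :: "nat \<Rightarrow> 'v set \<Rightarrow> ('v \<Rightarrow> 'v \<Rightarrow> bool) \<Rightarrow> bool" where
  "in_Bm k V adj \<longleftrightarrow> (\<exists>R. EPG_rep V adj R \<and>
      (\<forall>v\<in>V. bends (R v) \<le> k \<and> monotonic_path (R v)))"

definition bend_number :: "'v set \<Rightarrow> ('v \<Rightarrow> 'v \<Rightarrow> bool) \<Rightarrow> nat" where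
  "bend_number V adj = (LEAST k. in_B k V adj)"

definition mono_bend_number :: "'v set \<Rightarrow> ('v \<Rightarrow> 'v \<Rightarrow> bool) \<Rightarrow> nat" where
  "mono_bend_number V adj = (LEAST k. in_Bm k V adj)"

text \<open>The n-sun: vertex (False, i) is x_i, vertex (True, i) is y_i, for 1 \<le> i \<le> n.\<close>
definition sun_V :: "nat \<Rightarrow> (bool \<times> nat) set" where
  "sun_V n = {(b, i). 1 \<le> i \<and> i \<le> n}"

definition sun_edge :: "nat \<Rightarrow> bool \<times> nat \<Rightarrow> bool \<times> nat \<Rightarrow> bool" where
  "sun_edge n u v \<longleftrightarrow>
     (\<exists>i j. u = (False, i) \<and> v = (False, j) \<and> 1 \<le> i \<and> i < j \<and> j \<le> n) \<or>
     (\<exists>i j. u = (False, i) \<and> v = (True, j) \<and> 1 \<le> j \<and> j \<le> n \<and>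
        (i = j \<or> (j < n \<and> i = j + 1) \<or> (j = n \<and> i = 1)))"

definition sun_adj :: "nat \<Rightarrow> bool \<times> nat \<Rightarrow> bool \<times> nat \<Rightarrow> bool" where
  "sun_adj n u v \<longleftrightarrow> sun_edge n u v \<or> sun_edge n v u"

end

theory Submission
  imports Defs
begin

text \<open>A grid path with at most one bend uses exactly the grid edges of an L-shape: a
  horizontal and a vertical arm at a common corner. Two L-shapes share a grid edge iff they lie
  on a common row with overlapping horizontal arms or on a common column with overlapping
  vertical arms. In a one-bend representation of \<open>S\<^sub>n\<close> the pairwise adjacent paths of
  \<open>x\<^sub>1, \<dots>, x\<^sub>n\<close> therefore share a row, say, with their horizontal arms. A \<open>y\<^sub>i\<close> with its
  horizontal arm on that row lies to the left or to the right of the \<open>x\<close>-arms, and as distinct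
  \<open>y\<close>'s have incomparable neighbourhoods there is at most one on each side; but of any two
  consecutive \<open>y\<close>'s one lies on the row, so \<open>n \<le> 4\<close>. A finer look excludes \<open>n = 4\<close>, and for
  \<open>n = 3\<close> it shows that some \<open>x\<close>-path is a non-monotonic L with a genuine bend. Staircase paths
  give monotonic two-bend representations of all suns, and one extra hook gives a one-bend
  representation of \<open>S\<^sub>3\<close>.\<close>

definition lo :: "int \<Rightarrow> int \<Rightarrow> int" where
  "lo c h = min c (c + h)"

definition hi :: "int \<Rightarrow> int \<Rightarrow> int" where
  "hi c h = max c (c + h)"

definition overlaps :: "int \<Rightarrow> int \<Rightarrow> int \<Rightarrow> int \<Rightarrow> bool" where
  "overlaps c1 h1 c2 h2 \<longleftrightarrow> max (lo c1 h1) (lo c2 h2) < min (hi c1 h1) (hi c2 h2)"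

lemma lo_le: "lo c h \<le> c"
  and le_hi: "c \<le> hi c h"
  and lo_or_hi: "c = lo c h \<or> c = hi c h"
  and lo_less_hi_iff: "lo c h < hi c h \<longleftrightarrow> h \<noteq> 0"
  and lo_hi_nonneg: "0 \<le> h \<Longrightarrow> lo c h = c \<and> hi c h = c + h"
  and lo_hi_nonpos: "h \<le> 0 \<Longrightarrow> lo c h = c + h \<and> hi c h = c"
  and lo_hi_reverse: "lo (c + h) (- h) = lo c h \<and> hi (c + h) (- h) = hi c h"
  and lo_hi_zero: "lo c 0 = c \<and> hi c 0 = c"
  unfolding lo_def hi_def by auto

lemma overlaps_iff:
  "overlaps c1 h1 c2 h2 \<longleftrightarrow> lo c1 h1 < hi c2 h2 \<and> lo c2 h2 < hi c1 h1 \<and> h1 \<noteq> 0 \<and> h2 \<noteq> 0"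
  unfolding overlaps_def using lo_less_hi_iff[of c1 h1] lo_less_hi_iff[of c2 h2]
  by (auto simp: max_def min_def)

lemma overlaps_nonzero: "overlaps c1 h1 c2 h2 \<Longrightarrow> h1 \<noteq> 0 \<and> h2 \<noteq> 0"
  unfolding overlaps_iff by simp

definition hedges :: "int \<Rightarrow> int \<Rightarrow> int \<Rightarrow> gpoint set set" where
  "hedges r p q = {{(k, r), (k + 1, r)} | k. p \<le> k \<and> k < q}"

definition vedges :: "int \<Rightarrow> int \<Rightarrow> int \<Rightarrow> gpoint set set" where
  "vedges c p q = {{(c, k), (c, k + 1)} | k. p \<le> k \<and> k < q}"

text \<open>The L-shape with corner \<open>(c, r)\<close> whose arms end at \<open>(c + h, r)\<close> and \<open>(c, r + w)\<close>.\<close>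
definition L_edges :: "int \<Rightarrow> int \<Rightarrow> int \<Rightarrow> int \<Rightarrow> gpoint set set" where
  "L_edges c r h w = hedges r (lo c h) (hi c h) \<union> vedges c (lo r w) (hi r w)"

definition L_adj ::
    "('v \<Rightarrow> int) \<Rightarrow> ('v \<Rightarrow> int) \<Rightarrow> ('v \<Rightarrow> int) \<Rightarrow> ('v \<Rightarrow> int) \<Rightarrow> 'v \<Rightarrow> 'v \<Rightarrow> bool" where
  "L_adj C R H W u v \<longleftrightarrow>
     (R u = R v \<and> overlaps (C u) (H u) (C v) (H v)) \<or>
     (C u = C v \<and> overlaps (R u) (W u) (R v) (W v))"

lemma L_adj_transpose: "L_adj R C W H u v = L_adj C R H W u v"
  unfolding L_adj_def by auto

lemma hedges_Int_hedges:
  "hedges r1 p1 q1 \<inter> hedges r2 p2 q2 \<noteq> {} \<longleftrightarrow> r1 = r2 \<and> p1 < q2 \<and> p2 < q1 \<and> p1 < q1 \<and> p2 < q2"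
proof
  assume "hedges r1 p1 q1 \<inter> hedges r2 p2 q2 \<noteq> {}"
  then obtain k k' where "p1 \<le> k" "k < q1" "p2 \<le> k'" "k' < q2"
    and "{(k, r1), (k + 1, r1)} = {(k', r2), (k' + 1, r2)}"
    unfolding hedges_def by blast
  then show "r1 = r2 \<and> p1 < q2 \<and> p2 < q1 \<and> p1 < q1 \<and> p2 < q2"
    by (auto simp: doubleton_eq_iff)
next
  assume "r1 = r2 \<and> p1 < q2 \<and> p2 < q1 \<and> p1 < q1 \<and> p2 < q2"
  then have "{(max p1 p2, r1), (max p1 p2 + 1, r1)} \<in> hedges r1 p1 q1 \<inter> hedges r2 p2 q2"
    unfolding hedges_def by auto
  then show "hedges r1 p1 q1 \<inter> hedges r2 p2 q2 \<noteq> {}" by blast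
qed

lemma vedges_Int_vedges:
  "vedges c1 p1 q1 \<inter> vedges c2 p2 q2 \<noteq> {} \<longleftrightarrow> c1 = c2 \<and> p1 < q2 \<and> p2 < q1 \<and> p1 < q1 \<and> p2 < q2"
proof
  assume "vedges c1 p1 q1 \<inter> vedges c2 p2 q2 \<noteq> {}"
  then obtain k k' where "p1 \<le> k" "k < q1" "p2 \<le> k'" "k' < q2"
    and "{(c1, k), (c1, k + 1)} = {(c2, k'), (c2, k' + 1)}"
    unfolding vedges_def by blast
  then show "c1 = c2 \<and> p1 < q2 \<and> p2 < q1 \<and> p1 < q1 \<and> p2 < q2"
    by (auto simp: doubleton_eq_iff)
next
  assume "c1 = c2 \<and> p1 < q2 \<and> p2 < q1 \<and> p1 < q1 \<and> p2 < q2"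
  then have "{(c1, max p1 p2), (c1, max p1 p2 + 1)} \<in> vedges c1 p1 q1 \<inter> vedges c2 p2 q2"
    unfolding vedges_def by auto
  then show "vedges c1 p1 q1 \<inter> vedges c2 p2 q2 \<noteq> {}" by blast
qed

lemma hedges_Int_vedges: "hedges r p q \<inter> vedges c p' q' = {}"
  unfolding hedges_def vedges_def by (auto simp: doubleton_eq_iff)

lemma L_edges_Int_L_edges:
  "L_edges c1 r1 h1 w1 \<inter> L_edges c2 r2 h2 w2 \<noteq> {} \<longleftrightarrow>
     (r1 = r2 \<and> overlaps c1 h1 c2 h2) \<or> (c1 = c2 \<and> overlaps r1 w1 r2 w2)"
proof -
  have "L_edges c1 r1 h1 w1 \<inter> L_edges c2 r2 h2 w2 =
      (hedges r1 (lo c1 h1) (hi c1 h1) \<inter> hedges r2 (lo c2 h2) (hi c2 h2)) \<union>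
      (vedges c1 (lo r1 w1) (hi r1 w1) \<inter> vedges c2 (lo r2 w2) (hi r2 w2))"
    unfolding L_edges_def using hedges_Int_vedges by blast
  then have "L_edges c1 r1 h1 w1 \<inter> L_edges c2 r2 h2 w2 \<noteq> {} \<longleftrightarrow>
      hedges r1 (lo c1 h1) (hi c1 h1) \<inter> hedges r2 (lo c2 h2) (hi c2 h2) \<noteq> {} \<or>
      vedges c1 (lo r1 w1) (hi r1 w1) \<inter> vedges c2 (lo r2 w2) (hi r2 w2) \<noteq> {}"
    by simp
  then show ?thesis
    unfolding hedges_Int_hedges vedges_Int_vedges overlaps_iff lo_less_hi_iff by blast
qed

lemma unit_vector_cases:
  "\<bar>a\<bar> + \<bar>b\<bar> = (1::int) \<Longrightarrow> b = 0 \<and> (a = 1 \<or> a = -1) \<or> a = 0 \<and> (b = 1 \<or> b = -1)"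
  by (auto simp: abs_if split: if_splits)

lemma hedges_empty: "hedges r p p = {}"
  and vedges_empty: "vedges c p p = {}"
  unfolding hedges_def vedges_def by auto

lemma L_edges_zero: "L_edges c r 0 0 = {}"
  unfolding L_edges_def lo_def hi_def by (simp add: hedges_empty vedges_empty)

lemma hedges_eq_image: "hedges r p q = (\<lambda>k. {(k, r), (k + 1, r)}) ` {p..<q}"
  and vedges_eq_image: "vedges c p q = (\<lambda>k. {(c, k), (c, k + 1)}) ` {p..<q}"
  unfolding hedges_def vedges_def by auto

lemma unit_steps_edges:
  fixes g :: "int \<Rightarrow> 'a"
  assumes "d = 1 \<or> d = -1"
  shows "(\<lambda>i. {g (x + int i * d), g (x + int (Suc i) * d)}) ` {..<m} =
    (\<lambda>k. {g k, g (k + 1)}) ` {lo x (int m * d)..<hi x (int m * d)}"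
  using assms
proof
  assume d: "d = 1"
  show ?thesis
  proof (intro equalityI subsetI)
    fix e assume "e \<in> (\<lambda>k. {g k, g (k + 1)}) ` {lo x (int m * d)..<hi x (int m * d)}"
    then obtain k where "e = {g k, g (k + 1)}" "x \<le> k" "k < x + int m"
      using d by (auto simp: lo_def hi_def)
    then have "e = {g (x + int (nat (k - x)) * d), g (x + int (Suc (nat (k - x))) * d)}"
      and "nat (k - x) < m"
      using d by (auto simp: add.commute)
    then show "e \<in> (\<lambda>i. {g (x + int i * d), g (x + int (Suc i) * d)}) ` {..<m}" by blast
  qed (use d in \<open>force simp: lo_def hi_def algebra_simps\<close>)
next
  assume d: "d = -1"
  show ?thesis
  proof (intro equalityI subsetI)
    fix e assume "e \<in> (\<lambda>i. {g (x + int i * d), g (x + int (Suc i) * d)}) ` {..<m}"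
    then obtain i where "e = {g (x - int i - 1), g (x - int i - 1 + 1)}" "i < m"
      using d by (auto simp: algebra_simps insert_commute)
    then show "e \<in> (\<lambda>k. {g k, g (k + 1)}) ` {lo x (int m * d)..<hi x (int m * d)}"
      using d by (auto simp: lo_def hi_def)
  next
    fix e assume "e \<in> (\<lambda>k. {g k, g (k + 1)}) ` {lo x (int m * d)..<hi x (int m * d)}"
    then obtain k where "e = {g k, g (k + 1)}" "x - int m \<le> k" "k < x"
      using d by (auto simp: lo_def hi_def)
    then have "e = {g (x + int (nat (x - k - 1)) * d), g (x + int (Suc (nat (x - k - 1))) * d)}"
      and "nat (x - k - 1) < m"
      using d by (auto simp: insert_commute add.commute)
    then show "e \<in> (\<lambda>i. {g (x + int i * d), g (x + int (Suc i) * d)}) ` {..<m}" by blast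
  qed
qed

lemma L_edges_horizontal: "L_edges c r h 0 = hedges r (lo c h) (hi c h)"
  and L_edges_vertical: "L_edges c r 0 w = vedges c (lo r w) (hi r w)"
  unfolding L_edges_def lo_def hi_def by (simp_all add: hedges_empty vedges_empty)

lemma L_edges_join:
  assumes "(b = 0 \<and> h = 0) \<or> (a = 0 \<and> w = 0)"
  shows "L_edges c r a b \<union> L_edges (c + a) (r + b) h w = L_edges (c + a) (r + b) (h - a) (w - b)"
  using assms
proof
  assume "b = 0 \<and> h = 0"
  then show ?thesis
    using lo_hi_reverse[of c a] by (simp add: L_edges_def lo_hi_zero hedges_empty vedges_empty)
next
  assume "a = 0 \<and> w = 0"
  then show ?thesis
    using lo_hi_reverse[of r b] by (auto simp: L_edges_def lo_hi_zero hedges_empty vedges_empty)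
qed

locale grid_path =
  fixes P :: gpath
  assumes is_grid_path: "is_grid_path P"
begin

definition dx :: "nat \<Rightarrow> int" where
  "dx i = fst (P ! Suc i) - fst (P ! i)"

definition dy :: "nat \<Rightarrow> int" where
  "dy i = snd (P ! Suc i) - snd (P ! i)"

lemma length_ge_2: "2 \<le> length P"
  using is_grid_path unfolding is_grid_path_def by auto

lemma unit_step: "Suc i < length P \<Longrightarrow> \<bar>dx i\<bar> + \<bar>dy i\<bar> = 1"
  using is_grid_path unfolding is_grid_path_def grid_adj_def dx_def dy_def
  by (auto simp: abs_minus_commute)

lemma nth_Suc: "P ! Suc i = (fst (P ! i) + dx i, snd (P ! i) + dy i)"
  unfolding dx_def dy_def by (simp add: prod_eq_iff)

lemma no_reversal:
  assumes "Suc (Suc i) < length P"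
  shows "\<not> (dx (Suc i) = - dx i \<and> dy (Suc i) = - dy i)"
proof
  assume "dx (Suc i) = - dx i \<and> dy (Suc i) = - dy i"
  then have "P ! Suc (Suc i) = P ! i"
    unfolding dx_def dy_def by (simp add: prod_eq_iff)
  moreover have "distinct P"
    using is_grid_path unfolding is_grid_path_def by simp
  ultimately show False
    using assms nth_eq_iff_index_eq[of P "Suc (Suc i)" i] by simp
qed

lemma step_eq_if_same_direction:
  assumes "Suc (Suc i) < length P" "(dy i = 0) = (dy (Suc i) = 0)"
  shows "dx (Suc i) = dx i \<and> dy (Suc i) = dy i"
proof -
  have "\<bar>dx i\<bar> + \<bar>dy i\<bar> = 1" "\<bar>dx (Suc i)\<bar> + \<bar>dy (Suc i)\<bar> = 1"
    using unit_step assms(1) by auto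
  from unit_vector_cases[OF this(1)] unit_vector_cases[OF this(2)] show ?thesis
    using assms(2) no_reversal[OF assms(1)] by auto
qed

definition turns :: "nat set" where
  "turns = {i. 0 < i \<and> Suc i < length P \<and> (dy (i - 1) = 0) \<noteq> (dy i = 0)}"

lemma bends_eq_card_turns: "bends P = card turns"
proof -
  have "horizontal_step (P ! i) (P ! Suc i) \<longleftrightarrow> dy i = 0" for i
    unfolding horizontal_step_def dy_def by auto
  moreover have "horizontal_step (P ! (i - 1)) (P ! i) \<longleftrightarrow> dy (i - 1) = 0" if "0 < i" for i
    using that by (cases i) (auto simp: horizontal_step_def dy_def)
  ultimately show ?thesis
    unfolding bends_def turns_def by (intro arg_cong[where f = card] Collect_cong) blast
qed

lemma finite_turns: "finite turns"
proof (rule finite_subset)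
  show "turns \<subseteq> {..<length P}"
    unfolding turns_def lessThan_def using Suc_lessD by blast
qed simp

lemma step_eq_between_turns:
  assumes "m \<le> j" "Suc j < length P" "\<And>t. m < t \<Longrightarrow> t \<le> j \<Longrightarrow> t \<notin> turns"
  shows "dx j = dx m \<and> dy j = dy m"
  using assms
proof (induction j)
  case (Suc j)
  show ?case
  proof (cases "m = Suc j")
    case False
    then have "Suc j \<notin> turns" "m \<le> j" using Suc.prems by auto
    then have "(dy j = 0) = (dy (Suc j) = 0)"
      using Suc.prems(2) unfolding turns_def by simp
    then have "dx (Suc j) = dx j \<and> dy (Suc j) = dy j"
      using Suc.prems(2) step_eq_if_same_direction[of j] by blast
    moreover have "dx j = dx m \<and> dy j = dy m"
      using Suc.prems \<open>m \<le> j\<close> by (intro Suc.IH) auto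
    ultimately show ?thesis by argo
  qed simp
qed simp

lemma two_runs:
  assumes "bends P \<le> 1"
  obtains k u v u' v' where "0 < k" "k < length P" "\<bar>u\<bar> + \<bar>v\<bar> = 1"
    "\<And>i. i < k \<Longrightarrow> dx i = u \<and> dy i = v"
    "\<And>i. k \<le> i \<Longrightarrow> Suc i < length P \<Longrightarrow> dx i = u' \<and> dy i = v'"
    "Suc k < length P \<Longrightarrow> \<bar>u'\<bar> + \<bar>v'\<bar> = 1 \<and> (v = 0) \<noteq> (v' = 0)"
    "bends P = 0 \<Longrightarrow> Suc k = length P"
proof -
  have first: "\<bar>dx 0\<bar> + \<bar>dy 0\<bar> = 1"
    using unit_step length_ge_2 by simp
  have "card turns = 0 \<or> card turns = 1"
    using assms bends_eq_card_turns by linarith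
  then consider "turns = {}" | t where "turns = {t}"
    using finite_turns card_1_singletonE card_0_eq by blast
  then show ?thesis
  proof cases
    case 1
    show ?thesis
    proof (rule that[of "length P - 1" "dx 0" "dy 0"])
      show "dx i = dx 0 \<and> dy i = dy 0" if "i < length P - 1" for i
        using step_eq_between_turns[of 0 i] that 1 by simp
    qed (use length_ge_2 first in auto)
  next
    case 2
    then have "t \<in> turns" by simp
    then have t: "0 < t" "Suc t < length P" "(dy (t - 1) = 0) \<noteq> (dy t = 0)"
      unfolding turns_def by blast+
    have before: "dx i = dx 0 \<and> dy i = dy 0" if "i < t" for i
      using step_eq_between_turns[of 0 i] that t(2) 2 by simp
    show ?thesis
    proof (rule that[of t "dx 0" "dy 0" "dx t" "dy t"])
      show "dx i = dx t \<and> dy i = dy t" if "t \<le> i" "Suc i < length P" for i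
        using step_eq_between_turns[of t i] that 2 by simp
      have "dy (t - 1) = dy 0"
        using before[of "t - 1"] t(1) by simp
      then show "\<bar>dx t\<bar> + \<bar>dy t\<bar> = 1 \<and> (dy 0 = 0) \<noteq> (dy t = 0)"
        using t(2,3) unit_step[of t] by argo
      show "bends P = 0 \<Longrightarrow> Suc t = length P"
        using 2 bends_eq_card_turns by simp
      show "0 < t" "t < length P"
        using t by simp_all
    qed (fact first before)+
  qed
qed

definition run_edges :: "nat \<Rightarrow> nat \<Rightarrow> gpoint set set" where
  "run_edges m d = (\<lambda>i. {P ! i, P ! Suc i}) ` {m..<m + d}"

lemma path_edges_eq_run_edges: "path_edges P = run_edges 0 (length P - 1)"
  unfolding path_edges_def run_edges_def by auto

lemma run_edges_add: "run_edges m (d1 + d2) = run_edges m d1 \<union> run_edges (m + d1) d2"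
  unfolding run_edges_def image_Un[symmetric] by (simp add: ivl_disj_un(17) add.assoc)

lemma run_edges_shift: "run_edges m d = (\<lambda>i. {P ! (m + i), P ! (m + Suc i)}) ` {..<d}"
proof -
  have "{m..<m + d} = plus m ` {..<d}"
    by (simp add: lessThan_atLeast0 add.commute)
  then show ?thesis unfolding run_edges_def by (simp add: image_image)
qed

lemma nth_straight_run:
  assumes "m + d < length P" "\<And>i. m \<le> i \<Longrightarrow> i < m + d \<Longrightarrow> dx i = a \<and> dy i = b"
  shows "P ! (m + d) = (fst (P ! m) + int d * a, snd (P ! m) + int d * b)"
  using assms
proof (induction d)
  case (Suc d)
  then show ?case
    using nth_Suc[of "m + d"] by (simp add: algebra_simps)
qed simp

lemma straight_run_edges:
  assumes "m + d < length P" "\<And>i. m \<le> i \<Longrightarrow> i < m + d \<Longrightarrow> dx i = a \<and> dy i = b"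
  shows "run_edges m d = L_edges (fst (P ! m)) (snd (P ! m)) (int d * a) (int d * b)"
proof (cases "d = 0")
  case True
  then show ?thesis unfolding run_edges_def by (simp add: L_edges_zero)
next
  case False
  define x y where "x = fst (P ! m)" and "y = snd (P ! m)"
  have "\<bar>a\<bar> + \<bar>b\<bar> = 1"
    using unit_step[of m] assms False by simp
  have nth: "P ! (m + i) = (x + int i * a, y + int i * b)" if "i \<le> d" for i
    using nth_straight_run[of m i a b] assms that unfolding x_def y_def by simp
  have "run_edges m d = (\<lambda>i. {P ! (m + i), P ! (m + Suc i)}) ` {..<d}"
    by (rule run_edges_shift)
  also have "\<dots> = (\<lambda>i. {(x + int i * a, y + int i * b),
      (x + int (Suc i) * a, y + int (Suc i) * b)}) ` {..<d}"
  proof (rule image_cong)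
    fix i assume "i \<in> {..<d}"
    then show "{P ! (m + i), P ! (m + Suc i)} = {(x + int i * a, y + int i * b),
      (x + int (Suc i) * a, y + int (Suc i) * b)}"
      using nth[of i] nth[of "Suc i"] by (simp only: lessThan_iff Suc_leI less_imp_le)
  qed simp
  finally have run: "run_edges m d = \<dots>" .
  consider "b = 0" "a = 1 \<or> a = -1" | "a = 0" "b = 1 \<or> b = -1"
    using unit_vector_cases[OF \<open>\<bar>a\<bar> + \<bar>b\<bar> = 1\<close>] by blast
  then show ?thesis
  proof cases
    case 1
    have "run_edges m d = (\<lambda>i. {(x + int i * a, y), (x + int (Suc i) * a, y)}) ` {..<d}"
      unfolding run using 1 by simp
    also have "\<dots> = hedges y (lo x (int d * a)) (hi x (int d * a))"
      unfolding hedges_eq_image using unit_steps_edges[where g = "\<lambda>k. (k, y)" and d = a] 1 by simp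
    finally show ?thesis
      unfolding x_def y_def using 1 by (simp add: L_edges_horizontal)
  next
    case 2
    have "run_edges m d = (\<lambda>i. {(x, y + int i * b), (x, y + int (Suc i) * b)}) ` {..<d}"
      unfolding run using 2 by simp
    also have "\<dots> = vedges x (lo y (int d * b)) (hi y (int d * b))"
      unfolding vedges_eq_image using unit_steps_edges[where g = "\<lambda>k. (x, k)" and d = b] 2 by simp
    finally show ?thesis
      unfolding x_def y_def using 2 by (simp add: L_edges_vertical)
  qed
qed

lemma monotonic_step:
  "monotonic_path P \<Longrightarrow> Suc i < length P \<Longrightarrow> 0 \<le> dx i \<and> 0 \<le> dy i"
  unfolding monotonic_path_def dx_def dy_def by auto

lemma edges_L_shape:
  assumes "bends P \<le> 1"
  obtains c r h w where "path_edges P = L_edges c r h w"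
    "monotonic_path P \<Longrightarrow> h * w \<le> 0" "bends P = 0 \<Longrightarrow> h = 0 \<or> w = 0"
proof -
  obtain k u v u' v' where k: "0 < k" "k < length P" "\<bar>u\<bar> + \<bar>v\<bar> = 1"
    and run1: "\<And>i. i < k \<Longrightarrow> dx i = u \<and> dy i = v"
    and run2: "\<And>i. k \<le> i \<Longrightarrow> Suc i < length P \<Longrightarrow> dx i = u' \<and> dy i = v'"
    and turn: "Suc k < length P \<Longrightarrow> \<bar>u'\<bar> + \<bar>v'\<bar> = 1 \<and> (v = 0) \<noteq> (v' = 0)"
    and straight: "bends P = 0 \<Longrightarrow> Suc k = length P"
    using two_runs[OF assms] by blast
  define d where "d = length P - 1 - k"
  define x y where "x = fst (P ! 0)" and "y = snd (P ! 0)"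
  define a b a' b'
    where "a = int k * u" and "b = int k * v" and "a' = int d * u'" and "b' = int d * v'"
  have corner: "P ! k = (x + a, y + b)"
    using nth_straight_run[of 0 k u v] k run1 unfolding x_def y_def a_def b_def by simp
  have join: "(b = 0 \<and> a' = 0) \<or> (a = 0 \<and> b' = 0)"
    using unit_vector_cases[OF k(3)] unit_vector_cases turn unfolding a_def b_def a'_def b'_def d_def
    by (cases "Suc k < length P") auto
  have "path_edges P = run_edges 0 k \<union> run_edges k d"
    using k run_edges_add[of 0 k d] unfolding path_edges_eq_run_edges d_def by simp
  also have "\<dots> = L_edges x y a b \<union> L_edges (x + a) (y + b) a' b'"
    using straight_run_edges[of 0 k u v] straight_run_edges[of k d u' v'] run1 run2 corner k
    unfolding x_def y_def a_def b_def a'_def b'_def d_def by simp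
  also have "\<dots> = L_edges (x + a) (y + b) (a' - a) (b' - b)"
    using L_edges_join[OF join] .
  finally have edges: "path_edges P = L_edges (x + a) (y + b) (a' - a) (b' - b)" .
  show ?thesis
  proof (rule that[OF edges])
    assume mono: "monotonic_path P"
    have "0 \<le> a \<and> 0 \<le> b"
      using monotonic_step[OF mono, of 0] run1[of 0] k unfolding a_def b_def by simp
    moreover have "0 \<le> a' \<and> 0 \<le> b'"
      using monotonic_step[OF mono, of k] run2[of k] unfolding a'_def b'_def d_def
      by (cases "Suc k < length P") auto
    ultimately show "(a' - a) * (b' - b) \<le> 0"
      using join by (auto simp: mult_le_0_iff)
  next
    assume "bends P = 0"
    then have "a' = 0" "b' = 0"
      using straight unfolding a'_def b'_def d_def by simp_all
    with join show "a' - a = 0 \<or> b' - b = 0" by auto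
  qed
qed

end

text \<open>The neighbours of \<open>y\<^sub>i\<close> in \<open>S\<^sub>n\<close> are \<open>x\<^sub>i\<close> and \<open>x\<^bsub>sun_next n i\<^esub>\<close>.\<close>
definition sun_next :: "nat \<Rightarrow> nat \<Rightarrow> nat" where
  "sun_next n i = (if i < n then Suc i else 1)"

lemma sun_next_range: "1 \<le> i \<Longrightarrow> i \<le> n \<Longrightarrow> 1 \<le> sun_next n i \<and> sun_next n i \<le> n"
  unfolding sun_next_def by auto

lemma sun_next_neq: "2 \<le> n \<Longrightarrow> 1 \<le> i \<Longrightarrow> i \<le> n \<Longrightarrow> sun_next n i \<noteq> i"
  unfolding sun_next_def by auto

lemma sun_next_next_neq: "3 \<le> n \<Longrightarrow> 1 \<le> i \<Longrightarrow> i \<le> n \<Longrightarrow> sun_next n (sun_next n i) \<noteq> i"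
  unfolding sun_next_def by (cases "i < n"; cases "Suc i < n"; simp)

lemma sun_next_inj:
  "1 \<le> i \<Longrightarrow> i \<le> n \<Longrightarrow> 1 \<le> j \<Longrightarrow> j \<le> n \<Longrightarrow> sun_next n i = sun_next n j \<Longrightarrow> i = j"
  unfolding sun_next_def by (cases "i < n"; cases "j < n"; simp)

lemma sun_next_pair_eq:
  "3 \<le> n \<Longrightarrow> 1 \<le> i \<Longrightarrow> i \<le> n \<Longrightarrow> 1 \<le> k \<Longrightarrow> k \<le> n \<Longrightarrow> i = k \<or> i = sun_next n k \<Longrightarrow>
    sun_next n i = k \<or> sun_next n i = sun_next n k \<Longrightarrow> i = k"
  unfolding sun_next_def by (cases "i < n"; cases "k < n"; auto)

lemma sun_next_3_cycle: "1 \<le> i \<Longrightarrow> i \<le> 3 \<Longrightarrow> sun_next 3 (sun_next 3 (sun_next 3 i)) = i"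
  unfolding sun_next_def by (cases "i = 1 \<or> i = 2 \<or> i = 3") auto

lemma sun_next_4_cycle:
  assumes "1 \<le> i" "i \<le> 4"
  shows "sun_next 4 (sun_next 4 (sun_next 4 (sun_next 4 i))) = i"
    and "sun_next 4 (sun_next 4 (sun_next 4 i)) \<noteq> i"
  using assms unfolding sun_next_def by (cases "i = 1 \<or> i = 2 \<or> i = 3 \<or> i = 4"; auto)+

lemma sun_adj_x_x: "1 \<le> j \<Longrightarrow> j \<le> n \<Longrightarrow> 1 \<le> k \<Longrightarrow> k \<le> n \<Longrightarrow> j \<noteq> k \<Longrightarrow> sun_adj n (False, j) (False, k)"
  unfolding sun_adj_def sun_edge_def by (cases "j < k") auto

lemma sun_adj_y_x: "1 \<le> i \<Longrightarrow> i \<le> n \<Longrightarrow> sun_adj n (True, i) (False, j) \<longleftrightarrow> j = i \<or> j = sun_next n i"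
  unfolding sun_adj_def sun_edge_def sun_next_def by auto

lemma sun_not_adj_y_y: "\<not> sun_adj n (True, i) (True, k)"
  unfolding sun_adj_def sun_edge_def by auto

text \<open>An edge-intersection model of \<open>S\<^sub>n\<close> by L-shapes: vertex \<open>v\<close> is the L-shape with corner
  \<open>(C v, Rw v)\<close> and arms \<open>H v\<close>, \<open>W v\<close>.\<close>
locale sun_L_rep =
  fixes n :: nat and C Rw H W :: "bool \<times> nat \<Rightarrow> int"
  assumes n_ge_3: "3 \<le> n"
    and x_x_adj: "\<And>j k. 1 \<le> j \<Longrightarrow> j \<le> n \<Longrightarrow> 1 \<le> k \<Longrightarrow> k \<le> n \<Longrightarrow> j \<noteq> k \<Longrightarrow>
      L_adj C Rw H W (False, j) (False, k)"
    and y_x_adj_iff: "\<And>i j. 1 \<le> i \<Longrightarrow> i \<le> n \<Longrightarrow> 1 \<le> j \<Longrightarrow> j \<le> n \<Longrightarrow>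
      L_adj C Rw H W (True, i) (False, j) \<longleftrightarrow> j = i \<or> j = sun_next n i"
    and y_y_nonadj: "\<And>i k. 1 \<le> i \<Longrightarrow> i \<le> n \<Longrightarrow> 1 \<le> k \<Longrightarrow> k \<le> n \<Longrightarrow> i \<noteq> k \<Longrightarrow>
      \<not> L_adj C Rw H W (True, i) (True, k)"
begin

abbreviation "y_adj i j \<equiv> L_adj C Rw H W (True, i) (False, j)"

lemma y_eq_if_neighbours_subset:
  assumes "1 \<le> i" "i \<le> n" "1 \<le> k" "k \<le> n"
    and subset: "\<And>j. 1 \<le> j \<Longrightarrow> j \<le> n \<Longrightarrow> y_adj i j \<Longrightarrow> y_adj k j"
  shows "i = k"
proof -
  have next_i: "1 \<le> sun_next n i" "sun_next n i \<le> n"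
    using sun_next_range[OF assms(1,2)] by auto
  have "y_adj k i" "y_adj k (sun_next n i)"
    using subset y_x_adj_iff assms(1-4) next_i by auto
  then show ?thesis
    using sun_next_pair_eq[OF n_ge_3 assms(1-4)] y_x_adj_iff assms(1-4) next_i by auto
qed

end

text \<open>Up to transposition (see \<open>x_common_line\<close>) all \<open>x\<close>-shapes have their horizontal arm on
  one row \<open>l\<close>.\<close>
locale sun_L_rep_row = sun_L_rep +
  fixes l :: int
  assumes x_on_row: "\<And>j. 1 \<le> j \<Longrightarrow> j \<le> n \<Longrightarrow> Rw (False, j) = l \<and> H (False, j) \<noteq> 0"
begin

abbreviation "yl i \<equiv> lo (C (True, i)) (H (True, i))"
abbreviation "yr i \<equiv> hi (C (True, i)) (H (True, i))"
abbreviation "xl j \<equiv> lo (C (False, j)) (H (False, j))"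
abbreviation "xr j \<equiv> hi (C (False, j)) (H (False, j))"
abbreviation "y_row_adj i j \<equiv>
  Rw (True, i) = l \<and> overlaps (C (True, i)) (H (True, i)) (C (False, j)) (H (False, j))"
abbreviation "y_col_adj i j \<equiv>
  C (True, i) = C (False, j) \<and> overlaps (Rw (True, i)) (W (True, i)) l (W (False, j))"

definition y_on_row :: "nat \<Rightarrow> bool" where
  "y_on_row i \<longleftrightarrow> (\<exists>j. 1 \<le> j \<and> j \<le> n \<and> y_row_adj i j)"

definition y_left :: "nat \<Rightarrow> bool" where
  "y_left i \<longleftrightarrow> y_on_row i \<and> (\<forall>j. 1 \<le> j \<longrightarrow> j \<le> n \<longrightarrow> yr i \<le> xr j)"

definition y_right :: "nat \<Rightarrow> bool" where
  "y_right i \<longleftrightarrow> y_on_row i \<and> (\<forall>j. 1 \<le> j \<longrightarrow> j \<le> n \<longrightarrow> xl j \<le> yl i)"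

lemma y_adj_iff: "1 \<le> j \<Longrightarrow> j \<le> n \<Longrightarrow> y_adj i j \<longleftrightarrow> y_row_adj i j \<or> y_col_adj i j"
  using x_on_row[of j] unfolding L_adj_def by auto

lemma y_col_adj_if_not_on_row: "\<not> y_on_row i \<Longrightarrow> 1 \<le> j \<Longrightarrow> j \<le> n \<Longrightarrow> y_adj i j \<Longrightarrow> y_col_adj i j"
  using y_adj_iff y_on_row_def by blast

lemma x_arm_nonempty: "1 \<le> j \<Longrightarrow> j \<le> n \<Longrightarrow> xl j < xr j"
  using x_on_row lo_less_hi_iff by auto

lemma x_arms_meet: "1 \<le> j \<Longrightarrow> j \<le> n \<Longrightarrow> 1 \<le> k \<Longrightarrow> k \<le> n \<Longrightarrow> xl k \<le> xr j"
proof (cases "j = k")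
  case True
  then show ?thesis using lo_le le_hi order_trans by metis
next
  case False
  assume "1 \<le> j" "j \<le> n" "1 \<le> k" "k \<le> n"
  with False have "L_adj C Rw H W (False, k) (False, j)"
    using x_x_adj by auto
  then show ?thesis
    unfolding L_adj_def overlaps_iff
    using lo_le[of "C (False, k)" "H (False, k)"] le_hi[of "C (False, j)" "H (False, j)"] by auto
qed

text \<open>\<open>y\<^sub>i\<close> avoids the arm of \<open>x\<^bsub>i+2\<^esub>\<close>, which meets all the other \<open>x\<close>-arms.\<close>
lemma y_on_row_cases:
  assumes "1 \<le> i" "i \<le> n" "y_on_row i"
  shows "Rw (True, i) = l \<and> H (True, i) \<noteq> 0 \<and> (y_left i \<or> y_right i)"
proof -
  from assms(3) obtain j where j: "1 \<le> j" "j \<le> n" "Rw (True, i) = l"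
      "overlaps (C (True, i)) (H (True, i)) (C (False, j)) (H (False, j))"
    unfolding y_on_row_def by auto
  have hy: "H (True, i) \<noteq> 0" using overlaps_nonzero[OF j(4)] by simp
  define k where "k = sun_next n (sun_next n i)"
  have k: "1 \<le> k" "k \<le> n" using sun_next_range assms(1,2) unfolding k_def by metis+
  have "k \<noteq> i" "k \<noteq> sun_next n i"
    using sun_next_next_neq[OF n_ge_3 assms(1,2)] sun_next_neq[of n "sun_next n i"] n_ge_3
      sun_next_range[OF assms(1,2)] unfolding k_def by auto
  then have "\<not> y_adj i k" using y_x_adj_iff[OF assms(1,2) k] by auto
  then have "\<not> overlaps (C (True, i)) (H (True, i)) (C (False, k)) (H (False, k))"
    using y_adj_iff[OF k] j(3) by auto
  then have "yr i \<le> xl k \<or> xr k \<le> yl i"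
    using hy x_on_row[OF k] unfolding overlaps_iff by auto
  then have "y_left i \<or> y_right i"
    unfolding y_left_def y_right_def using assms(3) x_arms_meet[OF _ _ k] x_arms_meet[OF k]
    by (meson order_trans)
  then show ?thesis using j(3) hy by blast
qed

lemma y_left_row_adj_iff:
  assumes "y_left i" "1 \<le> i" "i \<le> n" "1 \<le> j" "j \<le> n"
  shows "y_row_adj i j \<longleftrightarrow> xl j < yr i"
proof -
  have "Rw (True, i) = l" "H (True, i) \<noteq> 0"
    using y_on_row_cases[OF assms(2,3)] assms(1) y_left_def by auto
  moreover have "yr i \<le> xr j" using assms(1,4,5) y_left_def by auto
  ultimately show ?thesis
    using x_on_row[OF assms(4,5)] lo_less_hi_iff[of "C (True, i)" "H (True, i)"]
    unfolding overlaps_iff by auto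
qed

lemma y_right_row_adj_iff:
  assumes "y_right i" "1 \<le> i" "i \<le> n" "1 \<le> j" "j \<le> n"
  shows "y_row_adj i j \<longleftrightarrow> yl i < xr j"
proof -
  have "Rw (True, i) = l" "H (True, i) \<noteq> 0"
    using y_on_row_cases[OF assms(2,3)] assms(1) y_right_def by auto
  moreover have "xl j \<le> yl i" using assms(1,4,5) y_right_def by auto
  ultimately show ?thesis
    using x_on_row[OF assms(4,5)] lo_less_hi_iff[of "C (True, i)" "H (True, i)"]
    unfolding overlaps_iff by auto
qed

text \<open>An \<open>x\<close>-arm met by \<open>y\<^sub>i\<close> starts left of \<open>yr i\<close> and, \<open>y\<^sub>k\<close> being left, ends right
  of \<open>yr k\<close>; so it covers the arm of \<open>y\<^sub>k\<close>.\<close>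
lemma y_left_neighbours_mono:
  assumes "y_left i" "y_left k" "1 \<le> i" "i \<le> n" "1 \<le> k" "k \<le> n" "yr i \<le> yl k"
    and j: "1 \<le> j" "j \<le> n" "y_adj i j"
  shows "y_adj k j"
proof -
  have "yl k < yr k"
    using y_on_row_cases[OF assms(5,6)] assms(2) lo_less_hi_iff y_left_def by auto
  moreover have "yr k \<le> xr j" using assms(2) j y_left_def by auto
  moreover have "C (True, i) \<le> yr i" using le_hi by auto
  ultimately have "xl j < yr k"
    using j y_adj_iff y_left_row_adj_iff[OF assms(1,3,4) j(1,2)] lo_or_hi assms(7)
    by (smt (verit))
  then show ?thesis using y_left_row_adj_iff[OF assms(2,5,6) j(1,2)] y_adj_iff[OF j(1,2)] by auto
qed

lemma y_right_neighbours_mono: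
  assumes "y_right i" "y_right k" "1 \<le> i" "i \<le> n" "1 \<le> k" "k \<le> n" "yr i \<le> yl k"
    and j: "1 \<le> j" "j \<le> n" "y_adj k j"
  shows "y_adj i j"
proof -
  have "yl i < yr i"
    using y_on_row_cases[OF assms(3,4)] assms(1) lo_less_hi_iff y_right_def by auto
  moreover have "xl j \<le> yl i" using assms(1) j y_right_def by auto
  moreover have "yl k \<le> C (True, k)" using lo_le by auto
  ultimately have "yl i < xr j"
    using j y_adj_iff y_right_row_adj_iff[OF assms(2,5,6) j(1,2)] lo_or_hi assms(7)
    by (smt (verit))
  then show ?thesis using y_right_row_adj_iff[OF assms(1,3,4) j(1,2)] y_adj_iff[OF j(1,2)] by auto
qed

lemma y_arms_disjoint:
  assumes "y_on_row i" "y_on_row k" "1 \<le> i" "i \<le> n" "1 \<le> k" "k \<le> n" "i \<noteq> k"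
  shows "yr i \<le> yl k \<or> yr k \<le> yl i"
proof -
  have "Rw (True, i) = l" "H (True, i) \<noteq> 0" "Rw (True, k) = l" "H (True, k) \<noteq> 0"
    using y_on_row_cases[OF assms(3,4,1)] y_on_row_cases[OF assms(5,6,2)] by auto
  moreover have "\<not> L_adj C Rw H W (True, i) (True, k)" using y_y_nonadj assms by auto
  ultimately show ?thesis unfolding L_adj_def overlaps_iff by auto
qed

lemma y_left_unique: "y_left i \<Longrightarrow> y_left k \<Longrightarrow> 1 \<le> i \<Longrightarrow> i \<le> n \<Longrightarrow> 1 \<le> k \<Longrightarrow> k \<le> n \<Longrightarrow> i = k"
  using y_arms_disjoint[of i k] y_left_neighbours_mono[of i k] y_left_neighbours_mono[of k i]
    y_eq_if_neighbours_subset[of i k] y_eq_if_neighbours_subset[of k i] y_left_def by metis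

lemma y_right_unique: "y_right i \<Longrightarrow> y_right k \<Longrightarrow> 1 \<le> i \<Longrightarrow> i \<le> n \<Longrightarrow> 1 \<le> k \<Longrightarrow> k \<le> n \<Longrightarrow> i = k"
  using y_arms_disjoint[of i k] y_right_neighbours_mono[of i k] y_right_neighbours_mono[of k i]
    y_eq_if_neighbours_subset[of i k] y_eq_if_neighbours_subset[of k i] y_right_def by metis

lemma no_three_on_row:
  assumes "y_on_row i" "y_on_row j" "y_on_row k" "1 \<le> i" "i \<le> n" "1 \<le> j" "j \<le> n" "1 \<le> k" "k \<le> n"
  shows "i = j \<or> i = k \<or> j = k"
  using y_on_row_cases[of i] y_on_row_cases[of j] y_on_row_cases[of k] assms
    y_left_unique[of i j] y_left_unique[of i k] y_left_unique[of j k]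
    y_right_unique[of i j] y_right_unique[of i k] y_right_unique[of j k]
  by blast

lemma y_left_right_if_on_row:
  assumes "y_on_row i" "y_on_row k" "1 \<le> i" "i \<le> n" "1 \<le> k" "k \<le> n" "i \<noteq> k"
  shows "(y_left i \<and> y_right k) \<or> (y_left k \<and> y_right i)"
  using y_on_row_cases[of i] y_on_row_cases[of k] y_left_unique[of i k] y_right_unique[of i k] assms
  by blast

text \<open>Otherwise \<open>y\<^sub>i\<close> and \<open>y\<^bsub>i+1\<^esub>\<close> meet their neighbours on the column of \<open>x\<^bsub>i+1\<^esub>\<close>, where
  the vertical \<open>x\<close>-arms are intervals ending at row \<open>l\<close>: there is no room left for two
  disjoint \<open>y\<close>-arms, each meeting exactly two of them.\<close>
lemma y_on_row_or_next:
  assumes i: "1 \<le> i" "i \<le> n"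
  shows "y_on_row i \<or> y_on_row (sun_next n i)"
proof (rule ccontr)
  assume "\<not> ?thesis"
  then have off: "\<not> y_on_row i" "\<not> y_on_row (sun_next n i)" by auto
  define j2 where "j2 = sun_next n i"
  define j3 where "j3 = sun_next n j2"
  have r2: "1 \<le> j2" "j2 \<le> n" using sun_next_range[OF i] j2_def by auto
  have r3: "1 \<le> j3" "j3 \<le> n" using sun_next_range[OF r2] j3_def by auto
  have "i \<noteq> j2" "j3 \<noteq> i" "j3 \<noteq> j2"
    using sun_next_neq[OF _ i] sun_next_next_neq[OF n_ge_3 i] sun_next_neq[OF _ r2] n_ge_3
    unfolding j2_def j3_def by auto
  have a1: "y_col_adj i i" and a2: "y_col_adj i j2" and a3: "\<not> y_adj i j3"
    using y_col_adj_if_not_on_row[OF off(1) i] y_x_adj_iff[OF i i]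
      y_col_adj_if_not_on_row[OF off(1) r2] y_x_adj_iff[OF i r2] y_x_adj_iff[OF i r3]
      \<open>j3 \<noteq> i\<close> \<open>j3 \<noteq> j2\<close>
    unfolding j2_def by auto
  have b2: "y_col_adj j2 j2" and b3: "y_col_adj j2 j3" and b1: "\<not> y_adj j2 i"
    using y_col_adj_if_not_on_row[OF off(2)[folded j2_def] r2] y_x_adj_iff[OF r2 r2]
      y_col_adj_if_not_on_row[OF off(2)[folded j2_def] r3] y_x_adj_iff[OF r2 r3]
      y_x_adj_iff[OF r2 i] \<open>i \<noteq> j2\<close> \<open>j3 \<noteq> i\<close>
    unfolding j3_def by auto
  note a = a1 a2 a3 and b = b1 b2 b3
  have "\<not> overlaps (Rw (True, i)) (W (True, i)) l (W (False, j3))"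
    using a b y_adj_iff[OF r3] by auto
  moreover have "\<not> overlaps (Rw (True, j2)) (W (True, j2)) l (W (False, i))"
    using a b y_adj_iff[OF i] by auto
  moreover have "\<not> overlaps (Rw (True, i)) (W (True, i)) (Rw (True, j2)) (W (True, j2))"
    using y_y_nonadj[OF i r2 \<open>i \<noteq> j2\<close>] a b unfolding L_adj_def by auto
  ultimately show False using a b unfolding overlaps_def lo_def hi_def by smt
qed

lemma sun_size_le_4: "n \<le> 4"
proof -
  define N where "N = {i \<in> {1..n}. y_on_row i}"
  define P where "P = {i \<in> {1..n}. sun_next n i \<in> N}"
  define Left Right where "Left = {i \<in> {1..n}. y_left i}" and "Right = {i \<in> {1..n}. y_right i}"
  have "card Left \<le> 1" "card Right \<le> 1"
    using y_left_unique y_right_unique unfolding Left_def Right_def by (auto simp: card_le_Suc0_iff_eq)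
  moreover have "card N \<le> card (Left \<union> Right)"
    unfolding N_def Left_def Right_def using y_on_row_cases by (intro card_mono) auto
  moreover note card_Un_le[of Left Right]
  moreover have "card P \<le> card N"
  proof (rule card_inj_on_le)
    show "inj_on (sun_next n) P" unfolding P_def inj_on_def using sun_next_inj by auto
  qed (auto simp: P_def N_def)
  moreover have "{1..n} \<subseteq> N \<union> P"
    using y_on_row_or_next sun_next_range unfolding N_def P_def by fastforce
  then have "card {1..n} \<le> card (N \<union> P)"
    by (intro card_mono) (auto simp: N_def P_def)
  moreover note card_Un_le[of N P]
  ultimately show ?thesis by simp
qed

lemma exists_not_on_row: "\<exists>a. 1 \<le> a \<and> a \<le> n \<and> \<not> y_on_row a"
proof (rule ccontr)
  assume "\<not> ?thesis"
  then have "y_on_row 1" "y_on_row 2" "y_on_row 3" using n_ge_3 by auto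
  then show False using no_three_on_row[of 1 2 3] n_ge_3 by simp
qed

text \<open>The configuration behind the cases \<open>n = 3, 4\<close>: \<open>y\<^sub>a\<close> is off the row, so it meets both
  of its neighbours \<open>x\<^sub>u\<close>, \<open>x\<^bsub>u'\<^esub>\<close> on its column, while \<open>y\<^sub>L\<close> and \<open>y\<^sub>R\<close> on the row
  each meet just one of them.\<close>
lemma x_corner_positions:
  assumes rg: "1 \<le> a" "a \<le> n" "1 \<le> L" "L \<le> n" "1 \<le> R" "R \<le> n" "1 \<le> u" "u \<le> n" "1 \<le> u'" "u' \<le> n"
    and ds: "a \<noteq> L" "a \<noteq> R" "u \<noteq> u'"
    and ty: "\<not> y_on_row a" "y_left L" "y_right R"
    and ad: "y_adj a u" "y_adj a u'" "y_adj L u" "\<not> y_adj L u'" "y_adj R u'" "\<not> y_adj R u"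
  shows "C (False, u) = xr u \<and> C (False, u') = xl u'"
proof -
  have va: "y_col_adj a u" "y_col_adj a u'"
    using y_col_adj_if_not_on_row[OF ty(1) rg(7,8) ad(1)]
      y_col_adj_if_not_on_row[OF ty(1) rg(9,10) ad(2)] by auto
  have Lr: "Rw (True, L) = l" and Rr: "Rw (True, R) = l"
    using y_on_row_cases[OF rg(3,4)] y_on_row_cases[OF rg(5,6)] ty(2,3) y_left_def y_right_def by auto
  have "\<not> L_adj C Rw H W (True, a) (True, L)" "\<not> L_adj C Rw H W (True, a) (True, R)"
    using y_y_nonadj rg ds by auto
  have Lu': "yr L \<le> xl u'" "\<not> y_col_adj L u'"
    using ad(4) y_left_row_adj_iff[OF ty(2) rg(3,4,9,10)] y_adj_iff[OF rg(9,10)] by auto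
  have Ru: "xr u \<le> yl R" "\<not> y_col_adj R u"
    using ad(6) y_right_row_adj_iff[OF ty(3) rg(5,6,7,8)] y_adj_iff[OF rg(7,8)] by auto
  have Lu: "xl u < yr L \<or> y_col_adj L u"
    using ad(3) y_left_row_adj_iff[OF ty(2) rg(3,4,7,8)] y_adj_iff[OF rg(7,8)] by auto
  have Ru': "yl R < xr u' \<or> y_col_adj R u'"
    using ad(5) y_right_row_adj_iff[OF ty(3) rg(5,6,9,10)] y_adj_iff[OF rg(9,10)] by auto
  have "xl u < xr u" "xl u' < xr u'" using x_arm_nonempty rg by auto
  consider "C (False, u) = xl u" "C (False, u') = xl u'" | "C (False, u) = xr u" "C (False, u') = xr u'"
    | "C (False, u) = xl u" "C (False, u') = xr u'" | "C (False, u) = xr u" "C (False, u') = xl u'"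
    using lo_or_hi by metis
  then show ?thesis
  proof cases
    case 1
    with Lu Lu' va have "y_col_adj L u" by auto
    with Lu' va 1 \<open>\<not> L_adj C Rw H W (True, a) (True, L)\<close> Lr show ?thesis
      unfolding L_adj_def overlaps_def lo_def hi_def by smt
  next
    case 2
    with Ru Ru' va have "y_col_adj R u'" by auto
    with Ru va 2 \<open>\<not> L_adj C Rw H W (True, a) (True, R)\<close> Rr show ?thesis
      unfolding L_adj_def overlaps_def lo_def hi_def by smt
  next
    case 3
    with Lu Lu' va \<open>xl u < xr u\<close> \<open>xl u' < xr u'\<close> have "y_col_adj L u" by auto
    with 3 Lu' va \<open>xl u < xr u\<close> \<open>xl u' < xr u'\<close> show ?thesis
      using le_hi[of "C (True, L)" "H (True, L)"] by auto
  qed simp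
qed

text \<open>The corners of \<open>x\<^sub>u\<close> and \<open>x\<^bsub>u'\<^esub>\<close> lie on the column of \<open>y\<^sub>a\<close>, so their horizontal arms
  point away from each other; being adjacent, their vertical arms overlap and so point the
  same way. Hence one of the two L-shapes is not monotonic.\<close>
lemma corner_product_pos:
  assumes rg: "1 \<le> a" "a \<le> n" "1 \<le> L" "L \<le> n" "1 \<le> R" "R \<le> n" "1 \<le> u" "u \<le> n" "1 \<le> u'" "u' \<le> n"
    and ds: "a \<noteq> L" "a \<noteq> R" "u \<noteq> u'"
    and ty: "\<not> y_on_row a" "y_left L" "y_right R"
    and ad: "y_adj a u" "y_adj a u'" "y_adj L u" "\<not> y_adj L u'" "y_adj R u'" "\<not> y_adj R u"
  shows "0 < H (False, u) * W (False, u) \<or> 0 < H (False, u') * W (False, u')"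
proof -
  have corners: "C (False, u) = xr u" "C (False, u') = xl u'"
    using x_corner_positions[OF assms] by auto
  have va: "y_col_adj a u" "y_col_adj a u'"
    using y_col_adj_if_not_on_row[OF ty(1) rg(7,8) ad(1)]
      y_col_adj_if_not_on_row[OF ty(1) rg(9,10) ad(2)] by auto
  have x: "Rw (False, u) = l" "Rw (False, u') = l" "H (False, u) \<noteq> 0" "H (False, u') \<noteq> 0"
    using x_on_row rg by auto
  have "H (False, u) < 0" "0 < H (False, u')"
    using corners x(3,4) lo_hi_nonneg[of "H (False, u)" "C (False, u)"]
      lo_hi_nonpos[of "H (False, u')" "C (False, u')"] by (auto simp: not_less[symmetric])
  moreover have "overlaps l (W (False, u)) l (W (False, u'))"
    using x_x_adj[OF rg(7-10) ds(3)] corners va x unfolding L_adj_def overlaps_iff by auto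
  then have "0 < W (False, u) * W (False, u')"
    unfolding overlaps_def lo_def hi_def by (auto simp: zero_less_mult_iff)
  ultimately show ?thesis by (auto simp: zero_less_mult_iff)
qed

text \<open>Two copies of the setting of \<open>x_corner_positions\<close>: the corner columns of the pairs
  \<open>x\<^sub>u, x\<^bsub>u'\<^esub>\<close> and \<open>x\<^sub>v, x\<^bsub>v'\<^esub>\<close> must coincide, and then the vertical arms cannot realise
  all the required adjacencies.\<close>
lemma no_config4:
  assumes rg: "1 \<le> a" "a \<le> n" "1 \<le> b" "b \<le> n" "1 \<le> L" "L \<le> n" "1 \<le> R" "R \<le> n"
      "1 \<le> u" "u \<le> n" "1 \<le> u'" "u' \<le> n" "1 \<le> v" "v \<le> n" "1 \<le> v'" "v' \<le> n"
    and ds: "a \<noteq> b" "a \<noteq> L" "a \<noteq> R" "b \<noteq> L" "b \<noteq> R" "u \<noteq> u'" "v \<noteq> v'" "u \<noteq> v'" "v \<noteq> u'"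
    and ty: "\<not> y_on_row a" "\<not> y_on_row b" "y_left L" "y_right R"
    and ad: "y_adj a u" "y_adj a u'" "\<not> y_adj a v" "y_adj b v" "y_adj b v'" "\<not> y_adj b u"
      "y_adj L u" "\<not> y_adj L u'" "y_adj L v" "\<not> y_adj L v'"
      "y_adj R u'" "\<not> y_adj R u" "y_adj R v'" "\<not> y_adj R v"
  shows False
proof -
  have p1: "C (False, u) = xr u" "C (False, u') = xl u'"
    using x_corner_positions[OF rg(1,2,5-12) ds(2,3,6) ty(1,3,4) ad(1,2,7,8,11,12)] by auto
  have p2: "C (False, v) = xr v" "C (False, v') = xl v'"
    using x_corner_positions[OF rg(3-8,13-16) ds(4,5,7) ty(2,3,4) ad(4,5,9,10,13,14)] by auto
  have va: "y_col_adj a u" "y_col_adj a u'"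
    using y_col_adj_if_not_on_row[OF ty(1) rg(9,10) ad(1)]
      y_col_adj_if_not_on_row[OF ty(1) rg(11,12) ad(2)] by auto
  have vb: "y_col_adj b v" "y_col_adj b v'"
    using y_col_adj_if_not_on_row[OF ty(2) rg(13,14) ad(4)]
      y_col_adj_if_not_on_row[OF ty(2) rg(15,16) ad(5)] by auto
  have rows: "Rw (False, u) = l" "Rw (False, u') = l" "Rw (False, v) = l" "Rw (False, v') = l"
    using x_on_row rg by auto
  have du: "xr u = xl u'" and dv: "xr v = xl v'"
    using p1 p2 va vb by auto
  have f: "overlaps l (W (False, u)) l (W (False, u'))"
    using x_x_adj[OF rg(9-12) ds(6)] p1 va rows unfolding L_adj_def overlaps_iff by auto
  have g: "overlaps l (W (False, v)) l (W (False, v'))"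
    using x_x_adj[OF rg(13-16) ds(7)] p2 vb rows unfolding L_adj_def overlaps_iff by auto
  have uv': "xr v < xr u \<or> (xr u = xr v \<and> overlaps l (W (False, u)) l (W (False, v')))"
    using x_x_adj[OF rg(9,10,15,16) ds(8)] p1 p2 du dv rows unfolding L_adj_def overlaps_iff by auto
  have vu': "xr u < xr v \<or> (xr u = xr v \<and> overlaps l (W (False, v)) l (W (False, u')))"
    using x_x_adj[OF rg(13,14,11,12) ds(9)] p1 p2 du dv rows unfolding L_adj_def overlaps_iff by auto
  from uv' vu' have "xr u = xr v" by auto
  moreover have "\<not> overlaps (Rw (True, a)) (W (True, a)) l (W (False, v))"
      "\<not> overlaps (Rw (True, b)) (W (True, b)) l (W (False, u))"
    using ad(3,6) y_adj_iff[OF rg(13,14)] y_adj_iff[OF rg(9,10)] va vb p1 p2 \<open>xr u = xr v\<close> by auto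
  ultimately show False using f g uv' vu' va vb unfolding overlaps_def lo_def hi_def by smt
qed

lemma sun_size_ne_4: "n \<noteq> 4"
proof
  assume n: "n = 4"
  obtain a where a: "1 \<le> a" "a \<le> n" "\<not> y_on_row a"
    using exists_not_on_row by blast
  define a1 a2 a3 where "a1 = sun_next n a" and "a2 = sun_next n a1" and "a3 = sun_next n a2"
  have nexts: "sun_next n a = a1" "sun_next n a1 = a2" "sun_next n a2 = a3" "sun_next n a3 = a"
    using sun_next_4_cycle(1)[OF a(1,2)[unfolded n]] n unfolding a1_def a2_def a3_def by simp_all
  have r: "1 \<le> a1" "a1 \<le> n" "1 \<le> a2" "a2 \<le> n" "1 \<le> a3" "a3 \<le> n"
    using sun_next_range a(1,2) unfolding a1_def a2_def a3_def by metis+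
  have d: "a \<noteq> a1" "a1 \<noteq> a2" "a2 \<noteq> a3" "a \<noteq> a2" "a1 \<noteq> a3" "a \<noteq> a3"
    using sun_next_neq[OF _ a(1,2)] sun_next_neq[OF _ r(1,2)] sun_next_neq[OF _ r(3,4)]
      sun_next_next_neq[OF _ a(1,2)] sun_next_next_neq[OF _ r(1,2)]
      sun_next_4_cycle(2)[OF a(1,2)[unfolded n]] n unfolding a1_def a2_def a3_def by auto
  have on_row: "y_on_row a1" "y_on_row a3"
    using y_on_row_or_next[OF a(1,2)] y_on_row_or_next[OF r(5,6)] a(3) nexts by auto
  then have "\<not> y_on_row a2"
    using no_three_on_row[of a1 a2 a3] r d by auto
  have adj: "y_adj i j \<longleftrightarrow> j = i \<or> j = sun_next n i" if "i \<in> {a, a1, a2, a3}" "j \<in> {a, a1, a2, a3}" for i j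
    using y_x_adj_iff that a r by auto
  consider "y_left a1" "y_right a3" | "y_left a3" "y_right a1"
    using y_left_right_if_on_row[OF on_row r(1,2,5,6) d(5)] by blast
  then show False
  proof cases
    case 1
    show False
      by (rule no_config4[of a a2 a1 a3 a1 a a2 a3])
        (use 1 a r d nexts adj \<open>\<not> y_on_row a2\<close> in auto)
  next
    case 2
    show False
      by (rule no_config4[of a a2 a3 a1 a a1 a3 a2])
        (use 2 a r d nexts adj \<open>\<not> y_on_row a2\<close> in auto)
  qed
qed

lemma sun_size_eq_3: "n = 3"
  using n_ge_3 sun_size_le_4 sun_size_ne_4 by simp

lemma exists_corner_product_pos: "\<exists>j. 1 \<le> j \<and> j \<le> n \<and> 0 < H (False, j) * W (False, j)"
proof -
  note n = sun_size_eq_3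
  obtain a where a: "1 \<le> a" "a \<le> n" "\<not> y_on_row a"
    using exists_not_on_row by blast
  define b c where "b = sun_next n a" and "c = sun_next n b"
  have nexts: "sun_next n a = b" "sun_next n b = c" "sun_next n c = a"
    using sun_next_3_cycle[OF a(1,2)[unfolded n]] n unfolding b_def c_def by simp_all
  have r: "1 \<le> b" "b \<le> n" "1 \<le> c" "c \<le> n"
    using sun_next_range a(1,2) unfolding b_def c_def by metis+
  have d: "a \<noteq> b" "b \<noteq> c" "a \<noteq> c"
    using sun_next_neq[OF _ a(1,2)] sun_next_neq[OF _ r(1,2)] sun_next_next_neq[OF _ a(1,2)] n
    unfolding b_def c_def by auto
  have on_row: "y_on_row b" "y_on_row c"
    using y_on_row_or_next[OF a(1,2)] y_on_row_or_next[OF r(3,4)] a(3) nexts by auto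
  have adj: "y_adj i j \<longleftrightarrow> j = i \<or> j = sun_next n i" if "i \<in> {a, b, c}" "j \<in> {a, b, c}" for i j
    using y_x_adj_iff that a r by auto
  consider "y_left b" "y_right c" | "y_left c" "y_right b"
    using y_left_right_if_on_row[OF on_row r d(2)] by blast
  then show ?thesis
  proof cases
    case 1
    have "0 < H (False, b) * W (False, b) \<or> 0 < H (False, a) * W (False, a)"
      by (rule corner_product_pos[of a b c b a]) (use 1 a r d nexts adj in auto)
    then show ?thesis using a r by blast
  next
    case 2
    have "0 < H (False, a) * W (False, a) \<or> 0 < H (False, b) * W (False, b)"
      by (rule corner_product_pos[of a c b a b]) (use 2 a r d nexts adj in auto)
    then show ?thesis using a r by blast
  qed
qed

end

lemma sun_L_rep_transpose:
  assumes "sun_L_rep n C Rw H W"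
  shows "sun_L_rep n Rw C W H"
proof -
  have "\<And>u v. L_adj Rw C W H u v = L_adj C Rw H W u v" by (rule L_adj_transpose)
  then show ?thesis using assms unfolding sun_L_rep_def by presburger
qed

context sun_L_rep
begin

lemma x_common_line:
  obtains l where "\<And>j. 1 \<le> j \<Longrightarrow> j \<le> n \<Longrightarrow> Rw (False, j) = l \<and> H (False, j) \<noteq> 0"
  | l where "\<And>j. 1 \<le> j \<Longrightarrow> j \<le> n \<Longrightarrow> C (False, j) = l \<and> W (False, j) \<noteq> 0"
proof -
  have "(\<exists>l. \<forall>j. 1 \<le> j \<and> j \<le> n \<longrightarrow> Rw (False, j) = l \<and> H (False, j) \<noteq> 0) \<or>
      (\<exists>l. \<forall>j. 1 \<le> j \<and> j \<le> n \<longrightarrow> C (False, j) = l \<and> W (False, j) \<noteq> 0)"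
  proof (rule ccontr)
    assume "\<not> ?thesis"
    then obtain j k where j: "1 \<le> j" "j \<le> n" "\<not> (Rw (False, j) = Rw (False, 1) \<and> H (False, j) \<noteq> 0)"
      and k: "1 \<le> k" "k \<le> n" "\<not> (C (False, k) = C (False, 1) \<and> W (False, k) \<noteq> 0)"
      by blast
    have one: "1 \<le> (1::nat)" "(1::nat) \<le> n" "1 \<le> (2::nat)" "(2::nat) \<le> n" using n_ge_3 by auto
    have j_col: "C (False, j) = C (False, 1) \<and> W (False, j) \<noteq> 0 \<and> W (False, 1) \<noteq> 0" if "j \<noteq> 1"
    proof -
      have "L_adj C Rw H W (False, 1) (False, j)" using x_x_adj[OF one(1,2) j(1,2)] that by auto
      then show ?thesis using j(3) unfolding L_adj_def overlaps_iff by auto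
    qed
    have k_row: "Rw (False, k) = Rw (False, 1) \<and> H (False, k) \<noteq> 0 \<and> H (False, 1) \<noteq> 0" if "k \<noteq> 1"
    proof -
      have "L_adj C Rw H W (False, 1) (False, k)" using x_x_adj[OF one(1,2) k(1,2)] that by auto
      then show ?thesis using k(3) unfolding L_adj_def overlaps_iff by auto
    qed
    show False
    proof (cases "j = 1"; cases "k = 1")
      assume "j = 1" "k = 1"
      then have "H (False, 1) = 0" "W (False, 1) = 0" using j(3) k(3) by auto
      moreover have "L_adj C Rw H W (False, 1) (False, 2)" using x_x_adj[OF one] by simp
      ultimately show False unfolding L_adj_def overlaps_iff by auto
    next
      assume "j = 1" "k \<noteq> 1"
      then show False using k_row j(3) by auto
    next
      assume "j \<noteq> 1" "k = 1"
      then show False using j_col k(3) by auto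
    next
      assume "j \<noteq> 1" "k \<noteq> 1"
      then have "C (False, j) = C (False, 1)" "W (False, j) \<noteq> 0" "Rw (False, k) = Rw (False, 1)"
        using j_col k_row by auto
      moreover from this have "j \<noteq> k" using k(3) by auto
      then have "L_adj C Rw H W (False, j) (False, k)" using x_x_adj j k by auto
      ultimately show False unfolding L_adj_def overlaps_iff using j(3) k(3) by auto
    qed
  qed
  then show ?thesis using that by blast
qed

theorem sun_size_eq_3_and_corner_product_pos:
  "n = 3 \<and> (\<exists>j. 1 \<le> j \<and> j \<le> n \<and> 0 < H (False, j) * W (False, j))"
proof (cases rule: x_common_line)
  case (1 l)
  interpret sun_L_rep_row n C Rw H W l
    by unfold_locales (use 1 in auto)
  show ?thesis using sun_size_eq_3 exists_corner_product_pos by blast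
next
  case (2 l)
  interpret transposed: sun_L_rep_row n Rw C W H l
    by (rule sun_L_rep_row.intro[OF sun_L_rep_transpose[OF sun_L_rep_axioms]])
      (unfold_locales, use 2 in auto)
  show ?thesis
    using transposed.sun_size_eq_3 transposed.exists_corner_product_pos by (auto simp: mult.commute)
qed

end

lemma L_shapes_of_one_bend_paths:
  assumes "\<And>v. v \<in> V \<Longrightarrow> is_grid_path (R v) \<and> bends (R v) \<le> 1"
  obtains C Rw H W :: "'v \<Rightarrow> int"
  where "\<And>v. v \<in> V \<Longrightarrow> path_edges (R v) = L_edges (C v) (Rw v) (H v) (W v)"
    and "\<And>v. v \<in> V \<Longrightarrow> monotonic_path (R v) \<Longrightarrow> H v * W v \<le> 0"
    and "\<And>v. v \<in> V \<Longrightarrow> bends (R v) = 0 \<Longrightarrow> H v = 0 \<or> W v = 0"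
proof -
  define Q where "Q v c r h w \<longleftrightarrow> path_edges (R v) = L_edges c r h w \<and>
    (monotonic_path (R v) \<longrightarrow> h * w \<le> 0) \<and> (bends (R v) = 0 \<longrightarrow> h = 0 \<or> w = 0)" for v c r h w
  have "\<forall>v \<in> V. \<exists>c r h w. Q v c r h w"
  proof
    fix v assume v: "v \<in> V"
    interpret grid_path "R v" using assms[OF v] by unfold_locales simp
    obtain c r h w where "path_edges (R v) = L_edges c r h w"
      "monotonic_path (R v) \<Longrightarrow> h * w \<le> 0" "bends (R v) = 0 \<Longrightarrow> h = 0 \<or> w = 0"
      using edges_L_shape assms[OF v] by blast
    then show "\<exists>c r h w. Q v c r h w" unfolding Q_def by (intro exI conjI impI) simp_all
  qed
  from bchoice[OF this] obtain C where "\<forall>v \<in> V. \<exists>r h w. Q v (C v) r h w" ..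
  from bchoice[OF this] obtain Rw where "\<forall>v \<in> V. \<exists>h w. Q v (C v) (Rw v) h w" ..
  from bchoice[OF this] obtain H where "\<forall>v \<in> V. \<exists>w. Q v (C v) (Rw v) (H v) w" ..
  from bchoice[OF this] obtain W where "\<forall>v \<in> V. Q v (C v) (Rw v) (H v) (W v)" ..
  then show ?thesis using that unfolding Q_def by blast
qed

lemma sun_one_bend_rep:
  assumes "3 \<le> n" "EPG_rep (sun_V n) (sun_adj n) R" "\<And>v. v \<in> sun_V n \<Longrightarrow> bends (R v) \<le> 1"
  shows "n = 3 \<and> (\<exists>v \<in> sun_V n. bends (R v) \<noteq> 0 \<and> \<not> monotonic_path (R v))"
proof -
  have "\<And>v. v \<in> sun_V n \<Longrightarrow> is_grid_path (R v) \<and> bends (R v) \<le> 1"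
    using assms(2,3) unfolding EPG_rep_def by blast
  then obtain C Rw H W :: "bool \<times> nat \<Rightarrow> int"
    where edges: "\<And>v. v \<in> sun_V n \<Longrightarrow> path_edges (R v) = L_edges (C v) (Rw v) (H v) (W v)"
      and mono: "\<And>v. v \<in> sun_V n \<Longrightarrow> monotonic_path (R v) \<Longrightarrow> H v * W v \<le> 0"
      and straight: "\<And>v. v \<in> sun_V n \<Longrightarrow> bends (R v) = 0 \<Longrightarrow> H v = 0 \<or> W v = 0"
    using L_shapes_of_one_bend_paths by blast
  have adj: "sun_adj n u v \<longleftrightarrow> L_adj C Rw H W u v" if "u \<in> sun_V n" "v \<in> sun_V n" "u \<noteq> v" for u v
  proof -
    have "sun_adj n u v \<longleftrightarrow> path_edges (R u) \<inter> path_edges (R v) \<noteq> {}"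
      using assms(2) that unfolding EPG_rep_def by blast
    also have "\<dots> \<longleftrightarrow> L_adj C Rw H W u v"
      unfolding edges[OF that(1)] edges[OF that(2)] L_edges_Int_L_edges L_adj_def ..
    finally show ?thesis .
  qed
  interpret sun_L_rep n C Rw H W
  proof
    fix i j k :: nat
    show "1 \<le> j \<Longrightarrow> j \<le> n \<Longrightarrow> 1 \<le> k \<Longrightarrow> k \<le> n \<Longrightarrow> j \<noteq> k \<Longrightarrow> L_adj C Rw H W (False, j) (False, k)"
      using adj[of "(False, j)" "(False, k)"] sun_adj_x_x by (simp add: sun_V_def)
    show "1 \<le> i \<Longrightarrow> i \<le> n \<Longrightarrow> 1 \<le> j \<Longrightarrow> j \<le> n \<Longrightarrow>
        L_adj C Rw H W (True, i) (False, j) \<longleftrightarrow> j = i \<or> j = sun_next n i"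
      using adj[of "(True, i)" "(False, j)"] sun_adj_y_x by (simp add: sun_V_def)
    show "1 \<le> i \<Longrightarrow> i \<le> n \<Longrightarrow> 1 \<le> k \<Longrightarrow> k \<le> n \<Longrightarrow> i \<noteq> k \<Longrightarrow> \<not> L_adj C Rw H W (True, i) (True, k)"
      using adj[of "(True, i)" "(True, k)"] sun_not_adj_y_y by (simp add: sun_V_def)
  qed (rule assms(1))
  obtain j where j: "(False, j) \<in> sun_V n" "0 < H (False, j) * W (False, j)"
    using sun_size_eq_3_and_corner_product_pos by (auto simp: sun_V_def)
  then have "bends (R (False, j)) \<noteq> 0 \<and> \<not> monotonic_path (R (False, j))"
    using mono[OF j(1)] straight[OF j(1)] by (cases "bends (R (False, j)) = 0") auto
  then show ?thesis using sun_size_eq_3_and_corner_product_pos j(1) by blast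
qed

lemma sun_not_in_B1:
  assumes "4 \<le> n"
  shows "\<not> in_B 1 (sun_V n) (sun_adj n)"
proof
  assume "in_B 1 (sun_V n) (sun_adj n)"
  then obtain R where "EPG_rep (sun_V n) (sun_adj n) R" "\<And>v. v \<in> sun_V n \<Longrightarrow> bends (R v) \<le> 1"
    unfolding in_B_def by blast
  with sun_one_bend_rep[of n R] assms show False by simp
qed

lemma sun3_not_in_B0: "\<not> in_B 0 (sun_V 3) (sun_adj 3)"
proof
  assume "in_B 0 (sun_V 3) (sun_adj 3)"
  then obtain R where "EPG_rep (sun_V 3) (sun_adj 3) R" "\<And>v. v \<in> sun_V 3 \<Longrightarrow> bends (R v) = 0"
    unfolding in_B_def by blast
  with sun_one_bend_rep[of 3 R] show False by simp
qed

lemma sun_not_in_Bm1: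
  assumes "3 \<le> n"
  shows "\<not> in_Bm 1 (sun_V n) (sun_adj n)"
proof
  assume "in_Bm 1 (sun_V n) (sun_adj n)"
  then obtain R where "EPG_rep (sun_V n) (sun_adj n) R"
    "\<And>v. v \<in> sun_V n \<Longrightarrow> bends (R v) \<le> 1 \<and> monotonic_path (R v)"
    unfolding in_Bm_def by blast
  with sun_one_bend_rep[of n R] assms show False by blast
qed

text \<open>From \<open>(x, y)\<close>: \<open>a\<close> steps up, then \<open>b\<close> steps right, then \<open>c\<close> steps up.\<close>
definition stair_point :: "int \<Rightarrow> int \<Rightarrow> nat \<Rightarrow> nat \<Rightarrow> nat \<Rightarrow> gpoint" where
  "stair_point x y a b i = (x + int (min (i - a) b), y + int (min i a) + int (i - (a + b)))"

definition staircase :: "int \<Rightarrow> int \<Rightarrow> nat \<Rightarrow> nat \<Rightarrow> nat \<Rightarrow> gpath" where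
  "staircase x y a b c = map (stair_point x y a b) [0..<a + b + c + 1]"

lemma length_staircase: "length (staircase x y a b c) = a + b + c + 1"
  unfolding staircase_def by simp

lemma nth_staircase: "i < a + b + c + 1 \<Longrightarrow> staircase x y a b c ! i = stair_point x y a b i"
  unfolding staircase_def by (simp del: upt_Suc)

lemma stair_point_Suc:
  "stair_point x y a b (Suc i) = (if a \<le> i \<and> i < a + b
     then (fst (stair_point x y a b i) + 1, snd (stair_point x y a b i))
     else (fst (stair_point x y a b i), snd (stair_point x y a b i) + 1))"
  unfolding stair_point_def by (auto simp: min_def nat_diff_split)

lemma stair_point_inj: "stair_point x y a b i = stair_point x y a b j \<Longrightarrow> i = j"
  unfolding stair_point_def by (auto simp: min_def split: if_splits)

lemma staircase_grid_path:
  assumes "0 < a + b + c"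
  shows "is_grid_path (staircase x y a b c)"
  unfolding is_grid_path_def length_staircase
proof (intro conjI allI impI)
  show "distinct (staircase x y a b c)"
    unfolding staircase_def distinct_map by (auto intro!: inj_onI stair_point_inj simp del: upt_Suc)
  show "grid_adj (staircase x y a b c ! i) (staircase x y a b c ! Suc i)" if "Suc i < a + b + c + 1" for i
    using that by (simp add: nth_staircase grid_adj_def stair_point_Suc)
qed (use assms in linarith)

lemma staircase_monotonic: "monotonic_path (staircase x y a b c)"
  unfolding monotonic_path_def length_staircase
proof (intro allI impI)
  fix i assume i: "Suc i < a + b + c + 1"
  show "fst (staircase x y a b c ! i) \<le> fst (staircase x y a b c ! Suc i) \<and>
      snd (staircase x y a b c ! i) \<le> snd (staircase x y a b c ! Suc i)"
    unfolding nth_staircase[OF i] nth_staircase[OF Suc_lessD[OF i]] stair_point_Suc[of x y a b i] by simp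
qed

lemma staircase_bends: "bends (staircase x y a b c) \<le> card ({a, a + b} - {0})"
proof -
  have horizontal: "horizontal_step (stair_point x y a b j) (stair_point x y a b (Suc j)) \<longleftrightarrow>
      a \<le> j \<and> j < a + b" for j
    unfolding horizontal_step_def stair_point_Suc[of x y a b j] by simp
  have "i \<in> {a, a + b} - {0}"
    if i: "0 < i" "Suc i < length (staircase x y a b c)"
      and bend: "horizontal_step (staircase x y a b c ! (i - 1)) (staircase x y a b c ! i) \<noteq>
        horizontal_step (staircase x y a b c ! i) (staircase x y a b c ! Suc i)" for i
  proof -
    obtain j where j: "i = Suc j" using i(1) by (cases i) auto
    have "Suc (Suc j) < a + b + c + 1" using i(2) j by (simp add: length_staircase)
    then have "(a \<le> j \<and> j < a + b) \<noteq> (a \<le> Suc j \<and> Suc j < a + b)"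
      using bend horizontal[of j] horizontal[of "Suc j"] unfolding j by (simp add: nth_staircase)
    then show ?thesis using j by auto
  qed
  then show ?thesis
    unfolding bends_def by (intro card_mono) auto
qed

lemma staircase_bends_le_2: "bends (staircase x y a b c) \<le> 2"
proof -
  have "card ({a, a + b} - {0}) \<le> 2"
    by (rule order_trans[OF card_Diff1_le]) (simp add: card_insert_if)
  with staircase_bends show ?thesis by (rule order_trans)
qed

lemma staircase_bends_le_1: "a = 0 \<or> b = 0 \<Longrightarrow> bends (staircase x y a b c) \<le> 1"
proof -
  assume "a = 0 \<or> b = 0"
  then have "card ({a, a + b} - {0}) \<le> 1"
    by (cases "a = 0") (auto simp: insert_Diff_if card_insert_if)
  with staircase_bends show ?thesis by (rule order_trans)
qed

lemma staircase_edges: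
  assumes "0 < a + b + c"
  shows "path_edges (staircase x y a b c) =
    vedges x y (y + int a) \<union> hedges (y + int a) x (x + int b) \<union> vedges (x + int b) (y + int a) (y + int a + int c)"
proof -
  interpret grid_path "staircase x y a b c"
    using staircase_grid_path[OF assms] by unfold_locales
  have steps: "dx i = (if a \<le> i \<and> i < a + b then 1 else 0) \<and> dy i = (if a \<le> i \<and> i < a + b then 0 else 1)"
    if "i < a + b + c" for i
    using that unfolding dx_def dy_def by (simp add: nth_staircase stair_point_Suc)
  have corners: "staircase x y a b c ! 0 = (x, y)" "staircase x y a b c ! a = (x, y + int a)"
    "staircase x y a b c ! (a + b) = (x + int b, y + int a)"
    by (simp_all add: nth_staircase stair_point_def)
  have "path_edges (staircase x y a b c) = run_edges 0 a \<union> run_edges a b \<union> run_edges (a + b) c"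
    unfolding path_edges_eq_run_edges length_staircase
    using run_edges_add[of 0 a "b + c"] run_edges_add[of a b c] by (simp add: add.assoc Un_assoc)
  also have "\<dots> = L_edges x y 0 (int a) \<union> L_edges x (y + int a) (int b) 0 \<union>
      L_edges (x + int b) (y + int a) 0 (int c)"
    using straight_run_edges[of 0 a 0 1] straight_run_edges[of a b 1 0] straight_run_edges[of "a + b" c 0 1]
      steps corners by (simp add: length_staircase)
  finally show ?thesis
    by (simp add: L_edges_horizontal L_edges_vertical lo_hi_nonneg)
qed

lemma hedges_Int_hedges_eq_empty:
  "hedges r1 p1 q1 \<inter> hedges r2 p2 q2 = {} \<longleftrightarrow> \<not> (r1 = r2 \<and> p1 < q2 \<and> p2 < q1 \<and> p1 < q1 \<and> p2 < q2)"
  using hedges_Int_hedges by blast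

lemma vedges_Int_vedges_eq_empty:
  "vedges c1 p1 q1 \<inter> vedges c2 p2 q2 = {} \<longleftrightarrow> \<not> (c1 = c2 \<and> p1 < q2 \<and> p2 < q1 \<and> p1 < q1 \<and> p2 < q2)"
  using vedges_Int_vedges by blast

lemma hedges_eq_empty_iff: "hedges r p q = {} \<longleftrightarrow> q \<le> p"
  and vedges_eq_empty_iff: "vedges c p q = {} \<longleftrightarrow> q \<le> p"
  using hedges_Int_hedges[of r p q r p q] vedges_Int_vedges[of c p q c p q] by auto

lemmas edges_Int_simps = Int_Un_distrib Int_Un_distrib2 hedges_Int_vedges
  hedges_Int_vedges[THEN Int_commute[THEN trans]] hedges_Int_hedges_eq_empty vedges_Int_vedges_eq_empty
  hedges_eq_empty_iff vedges_eq_empty_iff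

text \<open>\<open>x\<^sub>j\<close> climbs column \<open>j\<close> up to row 3 and then runs right along it; \<open>y\<^sub>i\<close> (\<open>i < n\<close>)
  is a small step joining the columns of \<open>x\<^sub>i\<close> and \<open>x\<^bsub>i+1\<^esub>\<close>; \<open>y\<^sub>n\<close> runs along row 1 from
  column 1 to column \<open>n\<close>.\<close>
definition sun_stair_rep :: "nat \<Rightarrow> bool \<times> nat \<Rightarrow> gpath" where
  "sun_stair_rep n v = (case v of
      (False, j) \<Rightarrow> staircase (int j) 0 3 (n + 1 - j) 0
    | (True, i) \<Rightarrow> if i < n then staircase (int i) 1 1 1 1 else staircase 1 0 1 (n - 1) 1)"

lemma sun_stair_rep_edges:
  shows "j \<le> n \<Longrightarrow> path_edges (sun_stair_rep n (False, j)) =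
      vedges (int j) 0 3 \<union> hedges 3 (int j) (1 + int n) \<union> vedges (1 + int n) 3 3"
    and "i < n \<Longrightarrow> path_edges (sun_stair_rep n (True, i)) =
      vedges (int i) 1 2 \<union> hedges 2 (int i) (int i + 1) \<union> vedges (int i + 1) 2 3"
    and "1 \<le> n \<Longrightarrow> path_edges (sun_stair_rep n (True, n)) =
      vedges 1 0 1 \<union> hedges 1 1 (int n) \<union> vedges (int n) 1 2"
  by (simp_all add: sun_stair_rep_def staircase_edges)

lemma sun_stair_rep_paths:
  "bends (sun_stair_rep n v) \<le> 2 \<and> monotonic_path (sun_stair_rep n v) \<and> is_grid_path (sun_stair_rep n v)"
  unfolding sun_stair_rep_def
  by (auto split: prod.splits bool.splits simp: staircase_bends_le_2 staircase_monotonic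
      intro!: staircase_grid_path)

lemma sun_stair_rep_adj_y_x:
  assumes "3 \<le> n" "1 \<le> i" "i \<le> n" "1 \<le> j" "j \<le> n"
  shows "sun_adj n (True, i) (False, j) \<longleftrightarrow>
    path_edges (sun_stair_rep n (True, i)) \<inter> path_edges (sun_stair_rep n (False, j)) \<noteq> {}"
proof (cases "i < n")
  case True
  then show ?thesis
    unfolding sun_adj_y_x[OF assms(2,3)] sun_stair_rep_edges(2)[OF True] sun_stair_rep_edges(1)[OF assms(5)]
      sun_next_def
    using assms by (simp add: edges_Int_simps) linarith
next
  case False
  then have "i = n" using assms(3) by simp
  then have "path_edges (sun_stair_rep n (True, i)) = vedges 1 0 1 \<union> hedges 1 1 (int n) \<union> vedges (int n) 1 2"
    using sun_stair_rep_edges(3)[of n] assms(1) by simp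
  then show ?thesis
    unfolding sun_adj_y_x[OF assms(2,3)] sun_stair_rep_edges(1)[OF assms(5)] sun_next_def
    using assms \<open>i = n\<close> by (simp add: edges_Int_simps) linarith
qed

lemma sun_stair_rep_not_adj_y_y:
  assumes "1 \<le> i" "i \<le> n" "1 \<le> k" "k \<le> n" "i \<noteq> k"
  shows "path_edges (sun_stair_rep n (True, i)) \<inter> path_edges (sun_stair_rep n (True, k)) = {}"
proof -
  have "path_edges (sun_stair_rep n (True, i)) \<inter> path_edges (sun_stair_rep n (True, k)) = {}"
    if "i < k" "k \<le> n" "1 \<le> i" for i k
  proof (cases "k < n")
    case True
    with that show ?thesis by (simp add: sun_stair_rep_edges edges_Int_simps)
  next
    case False
    with that have "k = n" by simp
    with that show ?thesis
      using sun_stair_rep_edges(3)[of n] by (simp add: sun_stair_rep_edges edges_Int_simps)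
  qed
  from this[of i k] this[of k i] assms show ?thesis
    by (cases "i < k") (auto simp: Int_commute)
qed

lemma sun_stair_rep_EPG:
  assumes "3 \<le> n"
  shows "EPG_rep (sun_V n) (sun_adj n) (sun_stair_rep n)"
  unfolding EPG_rep_def
proof (intro conjI ballI impI)
  fix u v assume "u \<in> sun_V n" "v \<in> sun_V n" "u \<noteq> v"
  then obtain a i b k where uv: "u = (a, i)" "v = (b, k)" "1 \<le> i" "i \<le> n" "1 \<le> k" "k \<le> n"
    by (auto simp: sun_V_def)
  show "sun_adj n u v \<longleftrightarrow> path_edges (sun_stair_rep n u) \<inter> path_edges (sun_stair_rep n v) \<noteq> {}"
  proof (cases a; cases b)
    assume "a" "b"
    then show ?thesis
      using sun_stair_rep_not_adj_y_y[of i n k] sun_not_adj_y_y \<open>u \<noteq> v\<close> uv by auto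
  next
    assume "a" "\<not> b"
    then show ?thesis using sun_stair_rep_adj_y_x[OF assms] uv by simp
  next
    assume "\<not> a" "b"
    then show ?thesis
      using sun_stair_rep_adj_y_x[OF assms] uv sun_adj_def by (auto simp: Int_commute)
  next
    assume "\<not> a" "\<not> b"
    then show ?thesis
      using sun_adj_x_x[of i n k] \<open>u \<noteq> v\<close> uv by (auto simp: sun_stair_rep_edges edges_Int_simps)
  qed
qed (use sun_stair_rep_paths in blast)

lemma sun_in_Bm2: "3 \<le> n \<Longrightarrow> in_Bm 2 (sun_V n) (sun_adj n)"
  unfolding in_Bm_def using sun_stair_rep_EPG sun_stair_rep_paths by blast

definition hook :: gpath where
  "hook = [(2, 0), (1, 0), (0, 0), (0, 1), (0, 2)]"

lemma hook_grid_path: "is_grid_path hook"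
  unfolding is_grid_path_def
proof (intro conjI allI impI)
  fix i assume "Suc i < length hook"
  then have "i = 0 \<or> i = 1 \<or> i = 2 \<or> i = 3" by (simp add: hook_def) arith
  then show "grid_adj (hook ! i) (hook ! Suc i)" by (elim disjE) (simp_all add: hook_def grid_adj_def)
qed (simp_all add: hook_def)

lemma hook_bends: "bends hook \<le> 1"
proof -
  have "{i. 0 < i \<and> Suc i < length hook \<and>
      horizontal_step (hook ! (i - 1)) (hook ! i) \<noteq> horizontal_step (hook ! i) (hook ! Suc i)} \<subseteq> {2}"
  proof
    fix i assume i: "i \<in> {i. 0 < i \<and> Suc i < length hook \<and>
      horizontal_step (hook ! (i - 1)) (hook ! i) \<noteq> horizontal_step (hook ! i) (hook ! Suc i)}"
    then have "i = 1 \<or> i = 2 \<or> i = 3" by (simp add: hook_def) arith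
    then show "i \<in> {2}" using i by (elim disjE) (simp_all add: hook_def horizontal_step_def)
  qed
  then have "bends hook \<le> card {2::nat}" unfolding bends_def by (rule card_mono[rotated]) simp
  then show ?thesis by simp
qed

lemma hook_edges: "path_edges hook = hedges 0 0 2 \<union> vedges 0 0 2"
proof -
  have "{i. Suc i < length hook} = {0, 1, 2, 3}" by (auto simp: hook_def)
  then have "path_edges hook = (\<lambda>i. {hook ! i, hook ! Suc i}) ` {0, 1, 2, 3}"
    unfolding path_edges_def by blast
  moreover have "{0..<2 :: int} = {0, 1}" by auto
  ultimately show ?thesis
    by (auto simp: hedges_eq_image vedges_eq_image hook_def insert_commute)
qed

text \<open>The hook is the only non-monotonic path here; some path has to be one,
  as \<open>S\<^sub>3\<close> has no monotonic one-bend representation.\<close>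
definition sun3_rep :: "bool \<times> nat \<Rightarrow> gpath" where
  "sun3_rep v =
    (if v = (False, 1) then staircase (-2) 0 0 4 0
     else if v = (False, 2) then staircase (-2) 0 0 2 2
     else if v = (False, 3) then hook
     else if v = (True, 1) then staircase (-2) 0 0 1 0
     else if v = (True, 2) then staircase 0 1 1 0 0
     else staircase 1 0 0 1 0)"

lemma sun3_rep_edges:
  "path_edges (sun3_rep (False, 1)) = vedges (-2) 0 0 \<union> hedges 0 (-2) 2 \<union> vedges 2 0 0"
  "path_edges (sun3_rep (False, 2)) = vedges (-2) 0 0 \<union> hedges 0 (-2) 0 \<union> vedges 0 0 2"
  "path_edges (sun3_rep (False, 3)) = hedges 0 0 2 \<union> vedges 0 0 2"
  "path_edges (sun3_rep (True, 1)) = vedges (-2) 0 0 \<union> hedges 0 (-2) (-1) \<union> vedges (-1) 0 0"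
  "path_edges (sun3_rep (True, 2)) = vedges 0 1 2 \<union> hedges 2 0 0 \<union> vedges 0 2 2"
  "path_edges (sun3_rep (True, 3)) = vedges 1 0 0 \<union> hedges 0 1 2 \<union> vedges 2 0 0"
  unfolding sun3_rep_def by (simp_all add: staircase_edges hook_edges)

lemma sun3_rep_paths: "bends (sun3_rep v) \<le> 1 \<and> is_grid_path (sun3_rep v)"
  unfolding sun3_rep_def using staircase_bends_le_1 staircase_grid_path hook_grid_path hook_bends by auto

lemma sun3_rep_EPG: "EPG_rep (sun_V 3) (sun_adj 3) sun3_rep"
  unfolding EPG_rep_def
proof (intro conjI ballI impI)
  have V: "sun_V 3 = {(False, 1), (False, 2), (False, 3), (True, 1), (True, 2), (True, 3)}"
    unfolding sun_V_def by auto
  fix u v assume "u \<in> sun_V 3" "v \<in> sun_V 3" "u \<noteq> v"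
  then show "sun_adj 3 u v \<longleftrightarrow> path_edges (sun3_rep u) \<inter> path_edges (sun3_rep v) \<noteq> {}"
    unfolding V
    by (elim insertE emptyE; simp only: sun3_rep_edges;
        simp add: edges_Int_simps sun_adj_def sun_edge_def)
qed (use sun3_rep_paths in blast)

lemma sun3_in_B1: "in_B 1 (sun_V 3) (sun_adj 3)"
  unfolding in_B_def using sun3_rep_EPG sun3_rep_paths by blast

lemma in_B_mono: "k \<le> k' \<Longrightarrow> in_B k V adj \<Longrightarrow> in_B k' V adj"
  unfolding in_B_def by (meson order_trans)

lemma in_Bm_mono: "k \<le> k' \<Longrightarrow> in_Bm k V adj \<Longrightarrow> in_Bm k' V adj"
  unfolding in_Bm_def by (meson order_trans)

lemma in_Bm_imp_in_B: "in_Bm k V adj \<Longrightarrow> in_B k V adj"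
  unfolding in_Bm_def in_B_def by blast

lemma bend_number_eqI:
  assumes "0 < k" "in_B k V adj" "\<not> in_B (k - 1) V adj"
  shows "bend_number V adj = k"
  unfolding bend_number_def
proof (rule Least_equality)
  show "k \<le> j" if "in_B j V adj" for j
    using in_B_mono[of j "k - 1" V adj] that assms(1,3) by (cases "j < k") auto
qed (rule assms(2))

lemma mono_bend_number_eqI:
  assumes "0 < k" "in_Bm k V adj" "\<not> in_Bm (k - 1) V adj"
  shows "mono_bend_number V adj = k"
  unfolding mono_bend_number_def
proof (rule Least_equality)
  show "k \<le> j" if "in_Bm j V adj" for j
    using in_Bm_mono[of j "k - 1" V adj] that assms(1,3) by (cases "j < k") auto
qed (rule assms(2))

theorem corollary3p9:
  shows "bend_number (sun_V 3) (sun_adj 3) = 1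
    \<and> (\<forall>n\<ge>4. bend_number (sun_V n) (sun_adj n) = 2)
    \<and> (\<forall>n\<ge>3. mono_bend_number (sun_V n) (sun_adj n) = 2)"
proof (intro conjI allI impI)
  show "bend_number (sun_V 3) (sun_adj 3) = 1"
    using bend_number_eqI[of 1 "sun_V 3" "sun_adj 3"] sun3_in_B1 sun3_not_in_B0 by simp
  show "bend_number (sun_V n) (sun_adj n) = 2" if "4 \<le> n" for n
    using bend_number_eqI[of 2 "sun_V n" "sun_adj n"] in_Bm_imp_in_B[OF sun_in_Bm2[of n]]
      sun_not_in_B1[of n] that by simp
  show "mono_bend_number (sun_V n) (sun_adj n) = 2" if "3 \<le> n" for n
    using mono_bend_number_eqI[of 2 "sun_V n" "sun_adj n"] sun_in_Bm2[of n] sun_not_in_Bm1[of n] that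
    by simp
qed

end
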